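(* Let $G$ be a graph and $W$ an object of $\mathrm{Sh}(G)$ whose letters, read cyclically, are $X_1,\dots,X_n$, and let $k$ be the number of cyclic rotations of the list $(X_1,\dots,X_n)$ that return the same list (so $k\mid n$). Then the underlying cyclic permutation induces an equivalence between the connected component of $\mathrm{Sh}(G)$ containing $W$ and the one-object category $\mathcal B C_k$ of the cyclic group of order $k$. In particular, if the list is aperiodic the component is thin.
   Context: $\mathrm{Sh}(G)$ is the shadow category of the free shadowed bicategory on a directed graph $G$: objects are $\langle\!\langle w\rangle\!\rangle$ for $w$ an endomorphism 1-cell of the free bicategory $\mathcal F(G)$ (a parenthesized composable word in edges of $G$ and formal units $I$); morphisms are generated by associators and unitors applied to any subword of $w$ and rotators $\theta:\langle\!\langle A\odot B\rangle\!\rangle\cong\langle\!\langle B\odot A\rangle\!\rangle$ applied to the outermost product, modulo the bicategory axioms, the shadow axioms ($\theta\theta=1$, $\ell\theta=r$ on $\langle\!\langle X\odot I\rangle\!\rangle$, and the associativity hexagon relating $\theta$ and $\alpha$) and naturality of $\theta$. The underlying cyclic permutation of a morphism is the induced bijection of edge occurrences. A list is aperiodic if no nontrivial rotation fixes it. *)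

theory Defs
  imports Main
begin

text \<open>A directed graph is given by source and target maps s t :: 'e => 'v on its
edge type.  1-cells of the free bicategory: parenthesized words in edges and
formal units.  Convention: if A : a -> b and B : b -> c then Cmp A B : a -> c.\<close>

datatype ('v, 'e) cell = E 'e | I 'v | Cmp "('v, 'e) cell" "('v, 'e) cell"

fun src1 :: "('e \<Rightarrow> 'v) \<Rightarrow> ('e \<Rightarrow> 'v) \<Rightarrow> ('v, 'e) cell \<Rightarrow> 'v" where
  "src1 s t (E e) = s e"
| "src1 s t (I v) = v"
| "src1 s t (Cmp A B) = src1 s t A"

fun tgt1 :: "('e \<Rightarrow> 'v) \<Rightarrow> ('e \<Rightarrow> 'v) \<Rightarrow> ('v, 'e) cell \<Rightarrow> 'v" where
  "tgt1 s t (E e) = t e"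
| "tgt1 s t (I v) = v"
| "tgt1 s t (Cmp A B) = tgt1 s t B"

fun wf1 :: "('e \<Rightarrow> 'v) \<Rightarrow> ('e \<Rightarrow> 'v) \<Rightarrow> ('v, 'e) cell \<Rightarrow> bool" where
  "wf1 s t (E e) = True"
| "wf1 s t (I v) = True"
| "wf1 s t (Cmp A B) = (wf1 s t A \<and> wf1 s t B \<and> tgt1 s t A = src1 s t B)"

definition endo :: "('e \<Rightarrow> 'v) \<Rightarrow> ('e \<Rightarrow> 'v) \<Rightarrow> ('v, 'e) cell \<Rightarrow> bool" where
  "endo s t A \<longleftrightarrow> wf1 s t A \<and> src1 s t A = tgt1 s t A"

fun letters :: "('v, 'e) cell \<Rightarrow> 'e list" where
  "letters (E e) = [e]"
| "letters (I v) = []"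
| "letters (Cmp A B) = letters A @ letters B"

text \<open>TV f g is vertical composition "first f, then g"; TH is horizontal composition.\<close>
datatype ('v, 'e) tc =
    TId "('v, 'e) cell"
  | TA "('v, 'e) cell" "('v, 'e) cell" "('v, 'e) cell"
  | TAi "('v, 'e) cell" "('v, 'e) cell" "('v, 'e) cell"
  | TL "('v, 'e) cell" | TLi "('v, 'e) cell"
  | TR "('v, 'e) cell" | TRi "('v, 'e) cell"
  | TH "('v, 'e) tc" "('v, 'e) tc"
  | TV "('v, 'e) tc" "('v, 'e) tc"

inductive tc_typ :: "('e \<Rightarrow> 'v) \<Rightarrow> ('e \<Rightarrow> 'v) \<Rightarrow> ('v, 'e) tc \<Rightarrow> ('v, 'e) cell \<Rightarrow> ('v, 'e) cell \<Rightarrow> bool"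
  for s t where
  "wf1 s t A \<Longrightarrow> tc_typ s t (TId A) A A"
| "wf1 s t (Cmp (Cmp A B) C) \<Longrightarrow> tc_typ s t (TA A B C) (Cmp (Cmp A B) C) (Cmp A (Cmp B C))"
| "wf1 s t (Cmp (Cmp A B) C) \<Longrightarrow> tc_typ s t (TAi A B C) (Cmp A (Cmp B C)) (Cmp (Cmp A B) C)"
| "wf1 s t A \<Longrightarrow> tc_typ s t (TL A) (Cmp (I (src1 s t A)) A) A"
| "wf1 s t A \<Longrightarrow> tc_typ s t (TLi A) A (Cmp (I (src1 s t A)) A)"
| "wf1 s t A \<Longrightarrow> tc_typ s t (TR A) (Cmp A (I (tgt1 s t A))) A"
| "wf1 s t A \<Longrightarrow> tc_typ s t (TRi A) A (Cmp A (I (tgt1 s t A)))"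
| "tc_typ s t f A A' \<Longrightarrow> tc_typ s t g B B' \<Longrightarrow> tgt1 s t A = src1 s t B \<Longrightarrow>
     tc_typ s t (TH f g) (Cmp A B) (Cmp A' B')"
| "tc_typ s t f A B \<Longrightarrow> tc_typ s t g B C \<Longrightarrow> tc_typ s t (TV f g) A C"

inductive eq2 :: "('e \<Rightarrow> 'v) \<Rightarrow> ('e \<Rightarrow> 'v) \<Rightarrow> ('v, 'e) tc \<Rightarrow> ('v, 'e) tc \<Rightarrow> bool"
  for s t where
  refl2: "tc_typ s t f A B \<Longrightarrow> eq2 s t f f"
| sym2: "eq2 s t f g \<Longrightarrow> eq2 s t g f"
| trans2: "eq2 s t f g \<Longrightarrow> eq2 s t g h \<Longrightarrow> eq2 s t f h"
| congH: "eq2 s t f f' \<Longrightarrow> eq2 s t g g' \<Longrightarrow> tc_typ s t (TH f g) X Y \<Longrightarrow> eq2 s t (TH f g) (TH f' g')"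
| congV: "eq2 s t f f' \<Longrightarrow> eq2 s t g g' \<Longrightarrow> tc_typ s t (TV f g) X Y \<Longrightarrow> eq2 s t (TV f g) (TV f' g')"
| idL2: "tc_typ s t f A B \<Longrightarrow> eq2 s t (TV (TId A) f) f"
| idR2: "tc_typ s t f A B \<Longrightarrow> eq2 s t (TV f (TId B)) f"
| assocV: "tc_typ s t f A B \<Longrightarrow> tc_typ s t g B C \<Longrightarrow> tc_typ s t h C D \<Longrightarrow>
     eq2 s t (TV (TV f g) h) (TV f (TV g h))"
| Hid: "wf1 s t (Cmp A B) \<Longrightarrow> eq2 s t (TH (TId A) (TId B)) (TId (Cmp A B))"
| interchange: "tc_typ s t f A B \<Longrightarrow> tc_typ s t g B C \<Longrightarrow> tc_typ s t f' A' B' \<Longrightarrow>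
     tc_typ s t g' B' C' \<Longrightarrow> tgt1 s t A = src1 s t A' \<Longrightarrow>
     eq2 s t (TH (TV f g) (TV f' g')) (TV (TH f f') (TH g g'))"
| invA1: "wf1 s t (Cmp (Cmp A B) C) \<Longrightarrow> eq2 s t (TV (TA A B C) (TAi A B C)) (TId (Cmp (Cmp A B) C))"
| invA2: "wf1 s t (Cmp (Cmp A B) C) \<Longrightarrow> eq2 s t (TV (TAi A B C) (TA A B C)) (TId (Cmp A (Cmp B C)))"
| invL1: "wf1 s t A \<Longrightarrow> eq2 s t (TV (TL A) (TLi A)) (TId (Cmp (I (src1 s t A)) A))"
| invL2: "wf1 s t A \<Longrightarrow> eq2 s t (TV (TLi A) (TL A)) (TId A)"
| invR1: "wf1 s t A \<Longrightarrow> eq2 s t (TV (TR A) (TRi A)) (TId (Cmp A (I (tgt1 s t A))))"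
| invR2: "wf1 s t A \<Longrightarrow> eq2 s t (TV (TRi A) (TR A)) (TId A)"
| natA: "tc_typ s t f A A' \<Longrightarrow> tc_typ s t g B B' \<Longrightarrow> tc_typ s t h C C' \<Longrightarrow>
     wf1 s t (Cmp (Cmp A B) C) \<Longrightarrow>
     eq2 s t (TV (TH (TH f g) h) (TA A' B' C')) (TV (TA A B C) (TH f (TH g h)))"
| natL: "tc_typ s t f A A' \<Longrightarrow>
     eq2 s t (TV (TH (TId (I (src1 s t A))) f) (TL A')) (TV (TL A) f)"
| natR: "tc_typ s t f A A' \<Longrightarrow>
     eq2 s t (TV (TH f (TId (I (tgt1 s t A)))) (TR A')) (TV (TR A) f)"
| pentagon: "wf1 s t (Cmp (Cmp (Cmp A B) C) D) \<Longrightarrow>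
     eq2 s t (TV (TA (Cmp A B) C D) (TA A B (Cmp C D)))
             (TV (TV (TH (TA A B C) (TId D)) (TA A (Cmp B C) D)) (TH (TId A) (TA B C D)))"
| triangle: "wf1 s t (Cmp A B) \<Longrightarrow>
     eq2 s t (TV (TA A (I (tgt1 s t A)) B) (TH (TId A) (TL B))) (TH (TR A) (TId B))"

text \<open>Objects: endomorphism 1-cells W (standing for the shadow of W).
Morphisms: shadows of 2-cells, rotators SRot A B : shadow(A.B) -> shadow(B.A),
and composites (SComp f g = first f, then g).\<close>
datatype ('v, 'e) sm = SSh "('v, 'e) tc" | SRot "('v, 'e) cell" "('v, 'e) cell"
  | SComp "('v, 'e) sm" "('v, 'e) sm"

inductive sm_typ :: "('e \<Rightarrow> 'v) \<Rightarrow> ('e \<Rightarrow> 'v) \<Rightarrow> ('v, 'e) sm \<Rightarrow> ('v, 'e) cell \<Rightarrow> ('v, 'e) cell \<Rightarrow> bool"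
  for s t where
  "tc_typ s t f A B \<Longrightarrow> endo s t A \<Longrightarrow> sm_typ s t (SSh f) A B"
| "endo s t (Cmp A B) \<Longrightarrow> sm_typ s t (SRot A B) (Cmp A B) (Cmp B A)"
| "sm_typ s t f A B \<Longrightarrow> sm_typ s t g B C \<Longrightarrow> sm_typ s t (SComp f g) A C"

inductive eqS :: "('e \<Rightarrow> 'v) \<Rightarrow> ('e \<Rightarrow> 'v) \<Rightarrow> ('v, 'e) sm \<Rightarrow> ('v, 'e) sm \<Rightarrow> bool"
  for s t where
  reflS: "sm_typ s t f A B \<Longrightarrow> eqS s t f f"
| symS: "eqS s t f g \<Longrightarrow> eqS s t g f"
| transS: "eqS s t f g \<Longrightarrow> eqS s t g h \<Longrightarrow> eqS s t f h"
| congC: "eqS s t f f' \<Longrightarrow> eqS s t g g' \<Longrightarrow> sm_typ s t (SComp f g) X Y \<Longrightarrow>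
     eqS s t (SComp f g) (SComp f' g')"
| congSh: "eq2 s t f g \<Longrightarrow> tc_typ s t f A B \<Longrightarrow> endo s t A \<Longrightarrow> eqS s t (SSh f) (SSh g)"
| functSh: "tc_typ s t f A B \<Longrightarrow> tc_typ s t g B C \<Longrightarrow> endo s t A \<Longrightarrow>
     eqS s t (SSh (TV f g)) (SComp (SSh f) (SSh g))"
| idLS: "sm_typ s t f A B \<Longrightarrow> eqS s t (SComp (SSh (TId A)) f) f"
| idRS: "sm_typ s t f A B \<Longrightarrow> eqS s t (SComp f (SSh (TId B))) f"
| assocS: "sm_typ s t f A B \<Longrightarrow> sm_typ s t g B C \<Longrightarrow> sm_typ s t h C D \<Longrightarrow>
     eqS s t (SComp (SComp f g) h) (SComp f (SComp g h))"
| rotrot: "endo s t (Cmp A B) \<Longrightarrow> eqS s t (SComp (SRot A B) (SRot B A)) (SSh (TId (Cmp A B)))"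
| natRot: "tc_typ s t f A A' \<Longrightarrow> tc_typ s t g B B' \<Longrightarrow> endo s t (Cmp A B) \<Longrightarrow>
     eqS s t (SComp (SSh (TH f g)) (SRot A' B')) (SComp (SRot A B) (SSh (TH g f)))"
| unitRot: "endo s t X \<Longrightarrow>
     eqS s t (SComp (SRot X (I (src1 s t X))) (SSh (TL X))) (SSh (TR X))"
| hexagon: "endo s t (Cmp (Cmp M N) P) \<Longrightarrow>
     eqS s t (SComp (SComp (SRot (Cmp M N) P) (SSh (TAi P M N))) (SRot (Cmp P M) N))
             (SComp (SComp (SSh (TA M N P)) (SRot M (Cmp N P))) (SSh (TA N P M)))"

definition sh_comp :: "('e \<Rightarrow> 'v) \<Rightarrow> ('e \<Rightarrow> 'v) \<Rightarrow> ('v, 'e) cell \<Rightarrow> ('v, 'e) cell \<Rightarrow> bool" where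
  "sh_comp s t W V \<longleftrightarrow>
     (\<lambda>X Y. (\<exists>f. sm_typ s t f X Y) \<or> (\<exists>f. sm_typ s t f Y X))\<^sup>*\<^sup>* W V"

text \<open>Number of letters moved from the front to the back (unreduced).\<close>
fun rot_amt :: "('v, 'e) sm \<Rightarrow> nat" where
  "rot_amt (SSh f) = 0"
| "rot_amt (SRot A B) = length (letters A)"
| "rot_amt (SComp f g) = rot_amt f + rot_amt g"

definition rot_occ :: "nat \<Rightarrow> nat \<Rightarrow> nat \<Rightarrow> nat" where
  "rot_occ n j = (\<lambda>i. if i < n then (i + j) mod n else i)"

text \<open>The induced bijection of edge occurrences (position i in the source goes to
position occ_perm n f i in the target), n = number of letters.\<close>
definition occ_perm :: "nat \<Rightarrow> ('v, 'e) sm \<Rightarrow> nat \<Rightarrow> nat" where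
  "occ_perm n f = rot_occ n (n - rot_amt f mod n)"

definition list_rots :: "'a list \<Rightarrow> 'a list \<Rightarrow> (nat \<Rightarrow> nat) set" where
  "list_rots L L' = {\<sigma>. (\<exists>j. \<sigma> = rot_occ (length L) j) \<and> length L' = length L \<and>
                        (\<forall>i<length L. L' ! (\<sigma> i) = L ! i)}"

definition aperiodic :: "'a list \<Rightarrow> bool" where
  "aperiodic L \<longleftrightarrow> (\<forall>r. 0 < r \<and> r < length L \<longrightarrow> rotate r L \<noteq> L)"

end

theory Submission
  imports Defs "HOL-Number_Theory.Cong"
begin

text \<open>The free bicategory on a graph is coherent: any two parallel 2-cells are equal. This follows
  by normalising every word to the right-nested word of its letters closed by a unit, Kelly's unit
  lemmas (consequences of the pentagon and triangle) making the normalisation natural.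

  In the shadow category, moving the first letter of a normal form to the back and renormalising is a
  morphism.  Naturality of the rotator, the hexagon and the unit axiom show that every morphism
  \<open>f : V \<rightarrow> V'\<close> equals: normalise \<open>V\<close>, perform \<open>rot_amt f\<close> such single-letter rotations,
  denormalise \<open>V'\<close>.  Performing all \<open>n\<close> single-letter rotations is the identity, while
  \<open>rot_amt f mod n\<close> is invariant under all relations, so morphisms \<open>V \<rightarrow> V'\<close> correspond exactly to the
  cyclic rotations of positions carrying the letters of \<open>V\<close> onto those of \<open>V'\<close>.  In the component of
  \<open>W\<close> every letter list is a rotation of that of \<open>W\<close>, so there are \<open>k\<close> of them: the order of the
  stabiliser of the letters of \<open>W\<close> under rotation, a subgroup of the cyclic group of order \<open>n\<close>.\<close>

section \<open>Cyclic rotations of lists\<close>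

lemma cong_minus_mod_add: "0 < n \<Longrightarrow> [n - a mod n + a = 0] (mod n)" for n a :: nat
proof -
  assume "0 < n"
  then have "a mod n < n"
    by simp
  moreover have "n * (a div n) + a mod n = a"
    by simp
  ultimately have "n - a mod n + a = n + n * (a div n)"
    by linarith
  then show ?thesis
    by (simp add: cong_def)
qed

lemma cong_minus_mod_iff:
  "0 < n \<Longrightarrow> [n - a mod n = n - b mod n] (mod n) \<longleftrightarrow> [a = b] (mod n)" for n a b :: nat
proof -
  assume n: "0 < n"
  have a: "[n - a mod n + a = 0] (mod n)" and b: "[n - b mod n + b = 0] (mod n)"
    using cong_minus_mod_add[OF n] by auto
  have "[n - a mod n = n - b mod n] (mod n) \<longleftrightarrow> [n - a mod n + (a + b) = n - b mod n + (a + b)] (mod n)"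
    by (rule cong_add_rcancel_nat[symmetric])
  also have "\<dots> \<longleftrightarrow> [(n - a mod n + a) + b = (n - b mod n + b) + a] (mod n)"
    by (simp add: ac_simps)
  also have "\<dots> \<longleftrightarrow> [b = a] (mod n)"
    using cong_add[OF a cong_refl[of b]] cong_add[OF b cong_refl[of a]]
    by (auto simp: cong_def)
  finally show ?thesis
    by (simp add: cong_sym_eq)
qed

lemma cong_minus_minus_mod: "0 < n \<Longrightarrow> j \<le> n \<Longrightarrow> [n - (n - j) mod n = j] (mod n)" for n j :: nat
proof -
  assume "0 < n" "j \<le> n"
  then have "[n - (n - j) mod n + (n - j) = j + (n - j)] (mod n)"
    using cong_minus_mod_add[of n "n - j"] by (simp add: cong_def)
  then show ?thesis
    by (simp add: cong_add_rcancel_nat)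
qed

lemma rot_occ_mod: "rot_occ n (j mod n) = rot_occ n j"
  by (rule ext) (simp add: rot_occ_def mod_add_right_eq)

lemma rot_occ_comp: "rot_occ n i \<circ> rot_occ n j = rot_occ n (j + i)"
  by (rule ext) (simp add: rot_occ_def mod_add_left_eq add.assoc)

lemma rot_occ_eq_iff: "0 < n \<Longrightarrow> rot_occ n i = rot_occ n j \<longleftrightarrow> [i = j] (mod n)"
proof
  assume "0 < n" and "rot_occ n i = rot_occ n j"
  then have "rot_occ n i 0 = rot_occ n j 0"
    by simp
  with \<open>0 < n\<close> show "[i = j] (mod n)"
    by (simp add: rot_occ_def cong_def)
next
  assume "[i = j] (mod n)"
  then show "rot_occ n i = rot_occ n j"
    by (metis cong_def rot_occ_mod)
qed

lemma rot_occ_inj_on: "0 < n \<Longrightarrow> inj_on (rot_occ n) {..<n}"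
  by (rule inj_onI) (simp add: rot_occ_eq_iff cong_def)

lemma rotate_mod_length: "length L = n \<Longrightarrow> rotate (j mod n) L = rotate j L"
  using rotate_conv_mod[of j L] by simp

lemma inj_rotate: "inj (rotate j)"
  unfolding rotate_def by (intro inj_fn inj_rotate1)

lemma rotate_minus_mod_rotate: "length M = n \<Longrightarrow> rotate (n - r mod n) (rotate r M) = M"
proof (cases "n = 0")
  case False
  assume M: "length M = n"
  have "(n - r mod n + r) mod n = 0"
    using cong_minus_mod_add[of n r] False by (simp add: cong_def)
  then show ?thesis
    using rotate_mod_length[OF M, of "n - r mod n + r"] by (simp add: rotate_rotate)
qed simp

lemma rotate_mult_fixpoint: "rotate q L = L \<Longrightarrow> rotate (q * m) L = L"
proof (induction m)
  case (Suc m)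
  then show ?case
    by (simp add: rotate_rotate[symmetric] add.commute)
qed simp

lemma list_rots_Nil: "list_rots [] [] = {\<lambda>i. i}"
  by (auto simp: list_rots_def rot_occ_def)

lemma list_rots_eq_image:
  assumes "length L = n" "length L' = n" "0 < n"
  shows "list_rots L L' = rot_occ n ` {j. j < n \<and> rotate j L' = L}"
proof -
  have carries: "(\<forall>i<n. L' ! (rot_occ n j i) = L ! i) \<longleftrightarrow> rotate j L' = L" for j
  proof -
    have "(\<forall>i<n. L' ! (rot_occ n j i) = L ! i) \<longleftrightarrow> (\<forall>i<n. rotate j L' ! i = L ! i)"
      using assms by (simp add: rot_occ_def nth_rotate add.commute)
    also have "\<dots> \<longleftrightarrow> rotate j L' = L"
      using assms by (simp add: list_eq_iff_nth_eq)
    finally show ?thesis .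
  qed
  show ?thesis
  proof
    show "list_rots L L' \<subseteq> rot_occ n ` {j. j < n \<and> rotate j L' = L}"
    proof
      fix \<sigma>
      assume "\<sigma> \<in> list_rots L L'"
      then obtain j where j: "\<sigma> = rot_occ n j" "rotate j L' = L"
        using assms carries by (auto simp: list_rots_def)
      then have "\<sigma> = rot_occ n (j mod n)" "rotate (j mod n) L' = L"
        using assms by (simp_all add: rot_occ_mod rotate_mod_length)
      then show "\<sigma> \<in> rot_occ n ` {j. j < n \<and> rotate j L' = L}"
        using assms by auto
    qed
  qed (use assms carries in \<open>auto simp: list_rots_def\<close>)
qed

lemma card_list_rots:
  "length L = n \<Longrightarrow> length L' = n \<Longrightarrow> 0 < n \<Longrightarrow>
     card (list_rots L L') = card {j. j < n \<and> rotate j L' = L}"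
proof -
  assume n: "length L = n" "length L' = n" "0 < n"
  have "inj_on (rot_occ n) {j. j < n \<and> rotate j L' = L}"
    by (rule inj_on_subset[OF rot_occ_inj_on[OF n(3)]]) auto
  then show ?thesis
    using list_rots_eq_image[OF n] by (simp add: card_image)
qed

text \<open>The rotations fixing a list are the multiples of its least period, which divides the length.\<close>

lemma card_rotate_fixpoints_dvd:
  assumes "length L = n" "0 < n"
  shows "card {j. j < n \<and> rotate j L = L} dvd n"
proof -
  define d where "d = (LEAST p. 0 < p \<and> rotate p L = L)"
  have d: "0 < d" "rotate d L = L"
    using LeastI[of "\<lambda>p. 0 < p \<and> rotate p L = L" n] assms unfolding d_def by auto
  have dvd_iff: "rotate j L = L \<longleftrightarrow> d dvd j" for j
  proof
    assume j: "rotate j L = L"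
    have "rotate (j mod d) L = rotate (j mod d) (rotate (d * (j div d)) L)"
      using rotate_mult_fixpoint[OF d(2)] by simp
    also have "\<dots> = L"
      using j by (simp add: rotate_rotate)
    finally have "\<not> (0 < j mod d)"
      using not_less_Least[of "j mod d" "\<lambda>p. 0 < p \<and> rotate p L = L"] d(1) unfolding d_def[symmetric]
      by auto
    then show "d dvd j"
      by (simp add: mod_eq_0_iff_dvd)
  qed (use rotate_mult_fixpoint[OF d(2)] in auto)
  obtain b where b: "n = d * b"
    using dvd_iff[of n] assms by auto
  have "{j. j < n \<and> rotate j L = L} = (\<lambda>m. d * m) ` {..<b}"
    using b d(1) by (auto simp: dvd_iff)
  moreover have "inj_on (\<lambda>m. d * m) {..<b}"
    using d(1) by (simp add: inj_on_def)
  ultimately show ?thesis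
    using b by (simp add: card_image)
qed

lemma card_shift_mod:
  fixes n c :: nat
  assumes "0 < n"
  shows "card {j. j < n \<and> P ((j + c) mod n)} = card {j. j < n \<and> P j}"
proof -
  define \<phi> where "\<phi> j = (j + c) mod n" for j
  have inj: "inj_on \<phi> {..<n}"
  proof (rule inj_onI)
    fix x y
    assume "x \<in> {..<n}" "y \<in> {..<n}" "\<phi> x = \<phi> y"
    then have "[x = y] (mod n)" "x < n" "y < n"
      using cong_add_rcancel_nat[where x = x and a = c and y = y and n = n]
      by (simp_all add: \<phi>_def cong_def)
    then show "x = y"
      by (simp add: cong_def)
  qed
  have onto: "\<phi> ` {..<n} = {..<n}"
    by (rule endo_inj_surj[OF _ _ inj]) (use assms in \<open>auto simp: \<phi>_def\<close>)
  have "\<phi> ` {j. j < n \<and> P (\<phi> j)} = {j. j < n \<and> P j}"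
  proof
    show "\<phi> ` {j. j < n \<and> P (\<phi> j)} \<subseteq> {j. j < n \<and> P j}"
      using assms by (auto simp: \<phi>_def)
  next
    show "{j. j < n \<and> P j} \<subseteq> \<phi> ` {j. j < n \<and> P (\<phi> j)}"
    proof
      fix i
      assume i: "i \<in> {j. j < n \<and> P j}"
      then have "i \<in> \<phi> ` {..<n}"
        using onto by simp
      then obtain j where "j < n" "i = \<phi> j"
        by auto
      then show "i \<in> \<phi> ` {j. j < n \<and> P (\<phi> j)}"
        using i by blast
    qed
  qed
  moreover have "inj_on \<phi> {j. j < n \<and> P (\<phi> j)}"
    by (rule inj_on_subset[OF inj]) auto
  ultimately show ?thesis
    using card_image[of \<phi> "{j. j < n \<and> P (\<phi> j)}"] by (simp add: \<phi>_def)
qed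

lemma card_rotate_between:
  assumes "length M = n" "0 < n"
  shows "card {j. j < n \<and> rotate j (rotate b M) = rotate a M} = card {j. j < n \<and> rotate j M = M}"
proof -
  let ?c = "n - a mod n"
  have rotate_back: "rotate ?c (rotate a M) = M"
    using rotate_minus_mod_rotate[OF assms(1)] .
  have "rotate j M = rotate a M \<longleftrightarrow> rotate ((j + ?c) mod n) M = M" for j
  proof -
    have "rotate ((j + ?c) mod n) M = rotate ?c (rotate j M)"
      using assms(1) by (simp add: rotate_mod_length rotate_rotate add.commute)
    then show ?thesis
      using inj_rotate[of ?c] rotate_back by (metis injD)
  qed
  then have "card {j. j < n \<and> rotate j M = rotate a M} = card {j. j < n \<and> rotate j M = M}"
    using card_shift_mod[OF assms(2), of "\<lambda>i. rotate i M = M" ?c] by simp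
  moreover have "rotate j (rotate b M) = rotate ((j + b) mod n) M" for j
    using assms(1) by (simp add: rotate_rotate rotate_mod_length)
  ultimately show ?thesis
    using card_shift_mod[OF assms(2), of "\<lambda>i. rotate i M = rotate a M" b] by simp
qed

lemma card_list_rots_self_dvd: "card (list_rots L L) dvd length L"
  using card_list_rots[of L "length L" L] card_rotate_fixpoints_dvd[of L "length L"]
  by (cases "L = []") (simp_all add: list_rots_Nil)

lemma card_list_rots_rotate: "card (list_rots (rotate a L) (rotate b L)) = card (list_rots L L)"
proof (cases "L = []")
  case False
  then show ?thesis
    using card_list_rots[of "rotate a L" "length L" "rotate b L"] card_list_rots[of L "length L" L]
      card_rotate_between[of L "length L" b a]
    by simp
qed (simp add: list_rots_Nil)

lemma card_list_rots_aperiodic: "aperiodic L \<Longrightarrow> card (list_rots L L) = 1"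
proof (cases "L = []")
  case False
  assume "aperiodic L"
  then have "{j. j < length L \<and> rotate j L = L} = {0}"
    using False by (auto simp: aperiodic_def)
  then show ?thesis
    using card_list_rots[of L "length L" L] False by simp
qed (simp add: list_rots_Nil)

section \<open>The underlying cyclic permutation\<close>

lemma occ_perm_SComp: "occ_perm n (SComp f g) = occ_perm n g \<circ> occ_perm n f"
proof (cases "n = 0")
  case True
  then show ?thesis
    by (simp add: occ_perm_def rot_occ_def fun_eq_iff)
next
  case False
  let ?a = "rot_amt f" and ?b = "rot_amt g"
  have "[(n - ?a mod n + ?a) + (n - ?b mod n + ?b) = 0 + 0] (mod n)"
    using cong_add[OF cong_minus_mod_add cong_minus_mod_add] False by blast
  moreover have "[n - (?a + ?b) mod n + (?a + ?b) = 0] (mod n)"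
    using cong_minus_mod_add False by blast
  ultimately have "[n - (?a + ?b) mod n + (?a + ?b) = (n - ?a mod n + (n - ?b mod n)) + (?a + ?b)] (mod n)"
    by (simp add: ac_simps cong_def)
  then have "[n - (?a + ?b) mod n = n - ?a mod n + (n - ?b mod n)] (mod n)"
    by (rule iffD1[OF cong_add_rcancel_nat])
  then show ?thesis
    using False by (simp add: occ_perm_def rot_occ_comp rot_occ_eq_iff)
qed

lemma occ_perm_eq_iff: "0 < n \<Longrightarrow> occ_perm n f = occ_perm n g \<longleftrightarrow> [rot_amt f = rot_amt g] (mod n)"
  by (simp add: occ_perm_def rot_occ_eq_iff cong_minus_mod_iff)

lemma occ_perm_0: "occ_perm 0 f = (\<lambda>i. i)"
  by (simp add: occ_perm_def rot_occ_def)

context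
  fixes s t :: "'e \<Rightarrow> 'v"
begin

section \<open>Typing 2-cells of the free bicategory\<close>

fun tc_dom :: "('v, 'e) tc \<Rightarrow> ('v, 'e) cell"
  and tc_cod :: "('v, 'e) tc \<Rightarrow> ('v, 'e) cell" where
  "tc_dom (TId A) = A"
| "tc_dom (TA A B C) = Cmp (Cmp A B) C"
| "tc_dom (TAi A B C) = Cmp A (Cmp B C)"
| "tc_dom (TL A) = Cmp (I (src1 s t A)) A"
| "tc_dom (TLi A) = A"
| "tc_dom (TR A) = Cmp A (I (tgt1 s t A))"
| "tc_dom (TRi A) = A"
| "tc_dom (TH f g) = Cmp (tc_dom f) (tc_dom g)"
| "tc_dom (TV f g) = tc_dom f"
| "tc_cod (TId A) = A"
| "tc_cod (TA A B C) = Cmp A (Cmp B C)"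
| "tc_cod (TAi A B C) = Cmp (Cmp A B) C"
| "tc_cod (TL A) = A"
| "tc_cod (TLi A) = Cmp (I (src1 s t A)) A"
| "tc_cod (TR A) = A"
| "tc_cod (TRi A) = Cmp A (I (tgt1 s t A))"
| "tc_cod (TH f g) = Cmp (tc_cod f) (tc_cod g)"
| "tc_cod (TV f g) = tc_cod g"

fun tc_wt :: "('v, 'e) tc \<Rightarrow> bool" where
  "tc_wt (TId A) = wf1 s t A"
| "tc_wt (TA A B C) = wf1 s t (Cmp (Cmp A B) C)"
| "tc_wt (TAi A B C) = wf1 s t (Cmp (Cmp A B) C)"
| "tc_wt (TL A) = wf1 s t A"
| "tc_wt (TLi A) = wf1 s t A"
| "tc_wt (TR A) = wf1 s t A"
| "tc_wt (TRi A) = wf1 s t A"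
| "tc_wt (TH f g) = (tc_wt f \<and> tc_wt g \<and> tgt1 s t (tc_dom f) = src1 s t (tc_dom g))"
| "tc_wt (TV f g) = (tc_wt f \<and> tc_wt g \<and> tc_cod f = tc_dom g)"

lemma tc_wt_parallel:
  "tc_wt f \<Longrightarrow> wf1 s t (tc_dom f) \<and> wf1 s t (tc_cod f) \<and> src1 s t (tc_cod f) = src1 s t (tc_dom f)
     \<and> tgt1 s t (tc_cod f) = tgt1 s t (tc_dom f) \<and> letters (tc_cod f) = letters (tc_dom f)"
  by (induction f) auto

lemma tc_wt_simps [simp]:
  "tc_wt f \<Longrightarrow> src1 s t (tc_cod f) = src1 s t (tc_dom f)"
  "tc_wt f \<Longrightarrow> tgt1 s t (tc_cod f) = tgt1 s t (tc_dom f)"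
  "tc_wt f \<Longrightarrow> letters (tc_cod f) = letters (tc_dom f)"
  "tc_wt f \<Longrightarrow> wf1 s t (tc_cod f)"
  "tc_wt f \<Longrightarrow> wf1 s t (tc_dom f)"
  using tc_wt_parallel[of f] by auto

lemma tc_typ_iff: "tc_typ s t f A B \<longleftrightarrow> tc_wt f \<and> tc_dom f = A \<and> tc_cod f = B"
proof
  assume "tc_typ s t f A B"
  then show "tc_wt f \<and> tc_dom f = A \<and> tc_cod f = B"
    by induction auto
next
  show "tc_wt f \<and> tc_dom f = A \<and> tc_cod f = B \<Longrightarrow> tc_typ s t f A B"
    by (induction f arbitrary: A B) (auto intro: tc_typ.intros)
qed

lemma eq2_parallel: "eq2 s t f g \<Longrightarrow> tc_wt f \<and> tc_wt g \<and> tc_dom f = tc_dom g \<and> tc_cod f = tc_cod g"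
  by (induction rule: eq2.induct) (auto simp: tc_typ_iff)

declare eq2.trans2 [trans]

lemma eq2_refl: "tc_wt f \<Longrightarrow> eq2 s t f f"
  using eq2.refl2 tc_typ_iff by blast

lemma eq2_TV: "eq2 s t f f' \<Longrightarrow> eq2 s t g g' \<Longrightarrow> tc_cod f = tc_dom g \<Longrightarrow> eq2 s t (TV f g) (TV f' g')"
  by (rule eq2.congV)
    (use eq2_parallel[of f f'] eq2_parallel[of g g'] in \<open>auto simp: tc_typ_iff\<close>)

lemma eq2_TV_left: "eq2 s t f f' \<Longrightarrow> tc_wt g \<Longrightarrow> tc_cod f = tc_dom g \<Longrightarrow> eq2 s t (TV f g) (TV f' g)"
  by (simp add: eq2_TV eq2_refl)

lemma eq2_TV_right: "eq2 s t g g' \<Longrightarrow> tc_wt f \<Longrightarrow> tc_cod f = tc_dom g \<Longrightarrow> eq2 s t (TV f g) (TV f g')"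
  by (simp add: eq2_TV eq2_refl)

lemma eq2_TH:
  "eq2 s t f f' \<Longrightarrow> eq2 s t g g' \<Longrightarrow> tgt1 s t (tc_dom f) = src1 s t (tc_dom g) \<Longrightarrow>
    eq2 s t (TH f g) (TH f' g')"
  by (rule eq2.congH)
    (use eq2_parallel[of f f'] eq2_parallel[of g g'] in \<open>auto simp: tc_typ_iff\<close>)

lemma eq2_TH_left:
  "eq2 s t f f' \<Longrightarrow> tc_wt g \<Longrightarrow> tgt1 s t (tc_dom f) = src1 s t (tc_dom g) \<Longrightarrow> eq2 s t (TH f g) (TH f' g)"
  by (simp add: eq2_TH eq2_refl)

lemma eq2_TH_right:
  "eq2 s t g g' \<Longrightarrow> tc_wt f \<Longrightarrow> tgt1 s t (tc_dom f) = src1 s t (tc_dom g) \<Longrightarrow> eq2 s t (TH f g) (TH f g')"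
  by (simp add: eq2_TH eq2_refl)

lemma eq2_TV_assoc:
  "tc_wt f \<Longrightarrow> tc_wt g \<Longrightarrow> tc_wt h \<Longrightarrow> tc_cod f = tc_dom g \<Longrightarrow> tc_cod g = tc_dom h \<Longrightarrow>
     eq2 s t (TV (TV f g) h) (TV f (TV g h))"
  by (rule eq2.assocV) (auto simp: tc_typ_iff)

lemma eq2_TV_TId_left: "tc_wt f \<Longrightarrow> A = tc_dom f \<Longrightarrow> eq2 s t (TV (TId A) f) f"
  by (rule eq2.idL2) (auto simp: tc_typ_iff)

lemma eq2_TV_TId_right: "tc_wt f \<Longrightarrow> B = tc_cod f \<Longrightarrow> eq2 s t (TV f (TId B)) f"
  by (rule eq2.idR2) (auto simp: tc_typ_iff)

lemma eq2_interchange: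
  "tc_wt f \<Longrightarrow> tc_wt g \<Longrightarrow> tc_wt f' \<Longrightarrow> tc_wt g' \<Longrightarrow> tc_cod f = tc_dom g \<Longrightarrow> tc_cod f' = tc_dom g' \<Longrightarrow>
     tgt1 s t (tc_dom f) = src1 s t (tc_dom f') \<Longrightarrow>
     eq2 s t (TH (TV f g) (TV f' g')) (TV (TH f f') (TH g g'))"
  by (rule eq2.interchange) (auto simp: tc_typ_iff)

lemma eq2_natL':
  "tc_wt f \<Longrightarrow>
    eq2 s t (TV (TH (TId (I (src1 s t (tc_dom f)))) f) (TL (tc_cod f))) (TV (TL (tc_dom f)) f)"
  by (rule eq2.natL) (simp add: tc_typ_iff)

lemma eq2_natR':
  "tc_wt f \<Longrightarrow>
    eq2 s t (TV (TH f (TId (I (tgt1 s t (tc_dom f))))) (TR (tc_cod f))) (TV (TR (tc_dom f)) f)"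
  by (rule eq2.natR) (simp add: tc_typ_iff)

fun tc_inv :: "('v, 'e) tc \<Rightarrow> ('v, 'e) tc" where
  "tc_inv (TId A) = TId A"
| "tc_inv (TA A B C) = TAi A B C"
| "tc_inv (TAi A B C) = TA A B C"
| "tc_inv (TL A) = TLi A"
| "tc_inv (TLi A) = TL A"
| "tc_inv (TR A) = TRi A"
| "tc_inv (TRi A) = TR A"
| "tc_inv (TH f g) = TH (tc_inv f) (tc_inv g)"
| "tc_inv (TV f g) = TV (tc_inv g) (tc_inv f)"

lemma tc_inv_typ: "tc_wt f \<Longrightarrow>
    tc_wt (tc_inv f) \<and> tc_dom (tc_inv f) = tc_cod f \<and> tc_cod (tc_inv f) = tc_dom f"
proof (induction f)
  case (TH f g)
  then show ?case by (simp del: tc_wt_simps) (metis tc_wt_simps(1,2))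
qed (auto simp del: tc_wt_simps)

lemma tc_inv_simps [simp]:
  "tc_wt f \<Longrightarrow> tc_wt (tc_inv f)"
  "tc_wt f \<Longrightarrow> tc_dom (tc_inv f) = tc_cod f"
  "tc_wt f \<Longrightarrow> tc_cod (tc_inv f) = tc_dom f"
  using tc_inv_typ[of f] by blast+

lemma tc_inv_inverse:
  "tc_wt f \<Longrightarrow>
    eq2 s t (TV f (tc_inv f)) (TId (tc_dom f)) \<and> eq2 s t (TV (tc_inv f) f) (TId (tc_cod f))"
proof (induction f)
  case (TH f g)
  have f: "tc_wt f" "tc_wt g" "tgt1 s t (tc_dom f) = src1 s t (tc_dom g)"
    using TH by auto
  have "eq2 s t (TV (TH f g) (TH (tc_inv f) (tc_inv g))) (TH (TV f (tc_inv f)) (TV g (tc_inv g)))"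
    by (rule eq2.sym2, rule eq2_interchange) (use f in auto)
  also have "eq2 s t \<dots> (TH (TId (tc_dom f)) (TId (tc_dom g)))"
    by (rule eq2_TH) (use TH f in auto)
  also have "eq2 s t \<dots> (TId (tc_dom (TH f g)))"
    using f by (auto intro: eq2.Hid)
  finally have right: "eq2 s t (TV (TH f g) (tc_inv (TH f g))) (TId (tc_dom (TH f g)))"
    by simp
  have "eq2 s t (TV (TH (tc_inv f) (tc_inv g)) (TH f g)) (TH (TV (tc_inv f) f) (TV (tc_inv g) g))"
    by (rule eq2.sym2, rule eq2_interchange) (use f in auto)
  also have "eq2 s t \<dots> (TH (TId (tc_cod f)) (TId (tc_cod g)))"
    by (rule eq2_TH) (use TH f in auto)
  also have "eq2 s t \<dots> (TId (tc_cod (TH f g)))"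
    using f by (auto intro: eq2.Hid)
  finally show ?case
    using right by simp
next
  case (TV f g)
  have f: "tc_wt f" "tc_wt g" "tc_cod f = tc_dom g"
    using TV by auto
  have "eq2 s t (TV (TV f g) (TV (tc_inv g) (tc_inv f))) (TV f (TV (TV g (tc_inv g)) (tc_inv f)))"
    by (rule eq2.trans2[OF eq2_TV_assoc eq2_TV_right], rule_tac [6] eq2.sym2, rule_tac [6] eq2_TV_assoc)
      (use f in auto)
  also have "eq2 s t \<dots> (TV f (TV (TId (tc_dom g)) (tc_inv f)))"
    by (rule eq2_TV_right, rule eq2_TV_left) (use TV f in auto)
  also have "eq2 s t \<dots> (TId (tc_dom f))"
    by (rule eq2.trans2[OF eq2_TV_right], rule eq2_TV_TId_left) (use TV f in auto)
  finally have right: "eq2 s t (TV (TV f g) (tc_inv (TV f g))) (TId (tc_dom (TV f g)))"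
    by simp
  have "eq2 s t (TV (TV (tc_inv g) (tc_inv f)) (TV f g)) (TV (tc_inv g) (TV (TV (tc_inv f) f) g))"
    by (rule eq2.trans2[OF eq2_TV_assoc eq2_TV_right], rule_tac [6] eq2.sym2, rule_tac [6] eq2_TV_assoc)
      (use f in auto)
  also have "eq2 s t \<dots> (TV (tc_inv g) (TV (TId (tc_cod f)) g))"
    by (rule eq2_TV_right, rule eq2_TV_left) (use TV f in auto)
  also have "eq2 s t \<dots> (TId (tc_cod g))"
    by (rule eq2.trans2[OF eq2_TV_right], rule eq2_TV_TId_left) (use TV f in auto)
  finally show ?case
    using right by simp
qed (auto intro: eq2_TV_TId_left eq2.invA1 eq2.invA2 eq2.invL1 eq2.invL2 eq2.invR1 eq2.invR2)

lemma eq2_cancel_right: "eq2 s t (TV f h) (TV g h) \<Longrightarrow> eq2 s t f g"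
proof -
  assume fg: "eq2 s t (TV f h) (TV g h)"
  note wt = eq2_parallel[OF fg] and inv = tc_inv_typ[of h] tc_inv_inverse[of h]
  have "eq2 s t f (TV f (TV h (tc_inv h)))"
    by (rule eq2.sym2, rule eq2.trans2[OF eq2_TV_right eq2_TV_TId_right]) (use wt inv in auto)
  also have "eq2 s t \<dots> (TV (TV f h) (tc_inv h))"
    by (rule eq2.sym2, rule eq2_TV_assoc) (use wt inv in auto)
  also have "eq2 s t \<dots> (TV (TV g h) (tc_inv h))"
    by (rule eq2_TV_left) (use wt inv fg in auto)
  also have "eq2 s t \<dots> (TV g (TV h (tc_inv h)))"
    by (rule eq2_TV_assoc) (use wt inv in auto)
  also have "eq2 s t \<dots> g"
    by (rule eq2.trans2[OF eq2_TV_right eq2_TV_TId_right]) (use wt inv in auto)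
  finally show ?thesis .
qed

lemma eq2_cancel_left: "eq2 s t (TV h f) (TV h g) \<Longrightarrow> eq2 s t f g"
proof -
  assume fg: "eq2 s t (TV h f) (TV h g)"
  note wt = eq2_parallel[OF fg] and inv = tc_inv_typ[of h] tc_inv_inverse[of h]
  have "eq2 s t f (TV (TV (tc_inv h) h) f)"
    by (rule eq2.sym2, rule eq2.trans2[OF eq2_TV_left eq2_TV_TId_left]) (use wt inv in auto)
  also have "eq2 s t \<dots> (TV (tc_inv h) (TV h f))"
    by (rule eq2_TV_assoc) (use wt inv in auto)
  also have "eq2 s t \<dots> (TV (tc_inv h) (TV h g))"
    by (rule eq2_TV_right) (use wt inv fg in auto)
  also have "eq2 s t \<dots> (TV (TV (tc_inv h) h) g)"
    by (rule eq2.sym2, rule eq2_TV_assoc) (use wt inv in auto)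
  also have "eq2 s t \<dots> g"
    by (rule eq2.trans2[OF eq2_TV_left eq2_TV_TId_left]) (use wt inv in auto)
  finally show ?thesis .
qed
section \<open>Coherence of the free bicategory\<close>

fun tc_seq :: "('v, 'e) tc list \<Rightarrow> ('v, 'e) tc" where
  "tc_seq [] = TId (I undefined)"
| "tc_seq [f] = f"
| "tc_seq (f # g # fs) = TV f (tc_seq (g # fs))"

fun tc_chain :: "('v, 'e) tc list \<Rightarrow> bool" where
  "tc_chain [] = False"
| "tc_chain [f] = tc_wt f"
| "tc_chain (f # g # fs) = (tc_wt f \<and> tc_cod f = tc_dom g \<and> tc_chain (g # fs))"

lemma tc_seq_dom [simp]: "fs \<noteq> [] \<Longrightarrow> tc_dom (tc_seq fs) = tc_dom (hd fs)"
  by (induction fs rule: tc_seq.induct) auto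

lemma tc_seq_cod [simp]: "fs \<noteq> [] \<Longrightarrow> tc_cod (tc_seq fs) = tc_cod (last fs)"
  by (induction fs rule: tc_seq.induct) auto

lemma tc_wt_tc_seq: "fs \<noteq> [] \<Longrightarrow> tc_wt (tc_seq fs) = tc_chain fs"
  by (induction fs rule: tc_seq.induct) auto

lemma tc_chain_append:
  "xs \<noteq> [] \<Longrightarrow> ys \<noteq> [] \<Longrightarrow>
     tc_chain (xs @ ys) \<longleftrightarrow> tc_chain xs \<and> tc_chain ys \<and> tc_cod (last xs) = tc_dom (hd ys)"
proof (induction xs rule: tc_chain.induct)
  case (2 f)
  then show ?case
    by (cases ys) auto
qed auto

lemma tc_seq_append:
  "tc_chain (xs @ ys) \<Longrightarrow> xs \<noteq> [] \<Longrightarrow> ys \<noteq> [] \<Longrightarrow>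
     eq2 s t (tc_seq (xs @ ys)) (TV (tc_seq xs) (tc_seq ys))"
proof (induction xs rule: tc_chain.induct)
  case (2 f)
  then show ?case
    by (cases ys) (auto intro: eq2_refl simp: tc_wt_tc_seq)
next
  case (3 f g fs)
  have f: "tc_chain (g # fs @ ys)" "tc_wt f" "tc_cod f = tc_dom g"
    using 3 by auto
  have gs: "tc_chain (g # fs)" "tc_chain ys" "tc_cod (last (g # fs)) = tc_dom (hd ys)"
    using f(1) tc_chain_append[of "g # fs" ys] 3 by auto
  have "eq2 s t (tc_seq (f # g # fs @ ys)) (TV f (TV (tc_seq (g # fs)) (tc_seq ys)))"
    using 3 f by (cases "fs @ ys") (auto intro!: eq2_TV_right)
  also have "eq2 s t \<dots> (TV (TV f (tc_seq (g # fs))) (tc_seq ys))"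
    by (rule eq2.sym2, rule eq2_TV_assoc) (use f gs 3 in \<open>auto simp: tc_wt_tc_seq\<close>)
  finally show ?case
    by simp
qed auto

lemma tc_seq_append':
  "tc_chain (xs @ ys) \<Longrightarrow> xs \<noteq> [] \<Longrightarrow> ys \<noteq> [] \<Longrightarrow>
     eq2 s t (TV (tc_seq xs) (tc_seq ys)) (tc_seq (xs @ ys))"
  by (rule eq2.sym2, rule tc_seq_append)

lemma tc_seq_subst_prefix:
  assumes mm': "eq2 s t (tc_seq m) (tc_seq m')" and chain: "tc_chain (m @ ys)"
    and "m \<noteq> []" "m' \<noteq> []"
  shows "eq2 s t (tc_seq (m @ ys)) (tc_seq (m' @ ys))"
proof (cases "ys = []")
  case False
  have m: "tc_chain m" "tc_chain ys" "tc_cod (last m) = tc_dom (hd ys)"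
    using assms False tc_chain_append[of m ys] by auto
  have m': "tc_chain m'" "tc_cod (last m') = tc_cod (last m)"
    using eq2_parallel[OF mm'] assms by (auto simp: tc_wt_tc_seq)
  have "eq2 s t (tc_seq (m @ ys)) (TV (tc_seq m) (tc_seq ys))"
    using tc_seq_append assms False by blast
  also have "eq2 s t \<dots> (TV (tc_seq m') (tc_seq ys))"
    by (rule eq2_TV_left) (use assms m False in \<open>auto simp: tc_wt_tc_seq\<close>)
  also have "eq2 s t \<dots> (tc_seq (m' @ ys))"
    by (rule tc_seq_append') (use m m' False assms tc_chain_append in auto)
  finally show ?thesis .
qed (use assms in simp)

text \<open>The equations for \<open>L\<close> and \<open>L'\<close> let the lemma be applied with \<open>rule\<close> to composites written
  out as explicit lists.\<close>

lemma tc_seq_subst: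
  assumes mm': "eq2 s t (tc_seq m) (tc_seq m')" and chain: "tc_chain (xs @ m @ ys)"
    and m: "m \<noteq> []" "m' \<noteq> []" and "L = xs @ m @ ys" "L' = xs @ m' @ ys"
  shows "eq2 s t (tc_seq L) (tc_seq L')"
proof (cases "xs = []")
  case True
  then show ?thesis
    using tc_seq_subst_prefix assms by simp
next
  case False
  have chains: "tc_chain xs" "tc_chain (m @ ys)" "tc_cod (last xs) = tc_dom (hd m)"
    using chain False m tc_chain_append[of xs "m @ ys"] by auto
  have rest: "eq2 s t (tc_seq (m @ ys)) (tc_seq (m' @ ys))"
    by (rule tc_seq_subst_prefix) (use mm' chains m in auto)
  have chain': "tc_chain (xs @ m' @ ys)"
    using eq2_parallel[OF rest] chains False m by (auto simp: tc_chain_append tc_wt_tc_seq)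
  have "eq2 s t (tc_seq (xs @ m @ ys)) (TV (tc_seq xs) (tc_seq (m @ ys)))"
    by (rule tc_seq_append) (use chain False m in auto)
  also have "eq2 s t \<dots> (TV (tc_seq xs) (tc_seq (m' @ ys)))"
    by (rule eq2_TV_right[OF rest]) (use chains False m in \<open>auto simp: tc_wt_tc_seq\<close>)
  also have "eq2 s t \<dots> (tc_seq (xs @ m' @ ys))"
    by (rule tc_seq_append') (use chain' False m in auto)
  finally show ?thesis
    using assms(5,6) by simp
qed

lemma eq2_natA':
  "tc_wt f \<Longrightarrow> tc_wt g \<Longrightarrow> tc_wt h \<Longrightarrow>
     tgt1 s t (tc_dom f) = src1 s t (tc_dom g) \<Longrightarrow> tgt1 s t (tc_dom g) = src1 s t (tc_dom h) \<Longrightarrow>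
     eq2 s t (TV (TH (TH f g) h) (TA (tc_cod f) (tc_cod g) (tc_cod h)))
             (TV (TA (tc_dom f) (tc_dom g) (tc_dom h)) (TH f (TH g h)))"
  by (rule eq2.natA) (auto simp add: tc_typ_iff)

lemma eq2_natA_seq:
  "tc_wt f \<Longrightarrow> tc_wt g \<Longrightarrow> tc_wt h \<Longrightarrow>
     tgt1 s t (tc_dom f) = src1 s t (tc_dom g) \<Longrightarrow> tgt1 s t (tc_dom g) = src1 s t (tc_dom h) \<Longrightarrow>
     tc_dom f = A \<Longrightarrow> tc_dom g = B \<Longrightarrow> tc_dom h = C \<Longrightarrow>
     tc_cod f = A' \<Longrightarrow> tc_cod g = B' \<Longrightarrow> tc_cod h = C' \<Longrightarrow>
     eq2 s t (tc_seq [TH (TH f g) h, TA A' B' C']) (tc_seq [TA A B C, TH f (TH g h)])"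
  using eq2_natA'[of f g h] by simp

lemma eq2_pentagon_seq:
  assumes "wf1 s t (Cmp (Cmp (Cmp A B) C) D)"
  shows "eq2 s t (tc_seq [TA (Cmp A B) C D, TA A B (Cmp C D)])
                 (tc_seq [TH (TA A B C) (TId D), TA A (Cmp B C) D, TH (TId A) (TA B C D)])"
proof -
  have "eq2 s t (tc_seq [TA (Cmp A B) C D, TA A B (Cmp C D)])
                (TV (TV (TH (TA A B C) (TId D)) (TA A (Cmp B C) D)) (TH (TId A) (TA B C D)))"
    using eq2.pentagon[OF assms] by simp
  also have "eq2 s t \<dots> (tc_seq [TH (TA A B C) (TId D), TA A (Cmp B C) D, TH (TId A) (TA B C D)])"
    by (simp, rule eq2_TV_assoc) (use assms in auto)
  finally show ?thesis .
qed

lemma eq2_cancel_whisker_unit_right: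
  assumes fg: "eq2 s t (TH f (TId (I w))) (TH g (TId (I w)))" and w: "w = tgt1 s t (tc_dom f)"
  shows "eq2 s t f g"
proof -
  have wt: "tc_wt f" "tc_wt g" "tc_dom f = tc_dom g" "tc_cod f = tc_cod g"
    using eq2_parallel[OF fg] by auto
  have "eq2 s t (TV (TR (tc_dom f)) f) (TV (TH f (TId (I w))) (TR (tc_cod f)))"
    using eq2.sym2[OF eq2_natR'[OF wt(1)]] w by simp
  also have "eq2 s t \<dots> (TV (TH g (TId (I w))) (TR (tc_cod g)))"
    by (rule eq2_TV) (use fg wt w in \<open>auto intro: eq2_refl\<close>)
  also have "eq2 s t \<dots> (TV (TR (tc_dom g)) g)"
    using eq2_natR'[OF wt(2)] wt w by simp
  finally show ?thesis
    using wt by (auto intro: eq2_cancel_left)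
qed

lemma eq2_cancel_whisker_unit_left:
  assumes fg: "eq2 s t (TH (TId (I w)) f) (TH (TId (I w)) g)" and w: "w = src1 s t (tc_dom f)"
  shows "eq2 s t f g"
proof -
  have wt: "tc_wt f" "tc_wt g" "tc_dom f = tc_dom g" "tc_cod f = tc_cod g"
    using eq2_parallel[OF fg] by auto
  have "eq2 s t (TV (TL (tc_dom f)) f) (TV (TH (TId (I w)) f) (TL (tc_cod f)))"
    using eq2.sym2[OF eq2_natL'[OF wt(1)]] w by simp
  also have "eq2 s t \<dots> (TV (TH (TId (I w)) g) (TL (tc_cod g)))"
    by (rule eq2_TV) (use fg wt w in \<open>auto intro: eq2_refl\<close>)
  also have "eq2 s t \<dots> (TV (TL (tc_dom g)) g)"
    using eq2_natL'[OF wt(2)] wt w by simp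
  finally show ?thesis
    using wt by (auto intro: eq2_cancel_left)
qed

lemma eq2_whisker_right_TV:
  assumes "tc_wt f" "tc_wt g" "tc_cod f = tc_dom g" "wf1 s t C" "tgt1 s t (tc_dom f) = src1 s t C"
  shows "eq2 s t (tc_seq [TH (TV f g) (TId C)]) (tc_seq [TH f (TId C), TH g (TId C)])"
proof -
  have "eq2 s t (TH (TV f g) (TId C)) (TH (TV f g) (TV (TId C) (TId C)))"
    by (rule eq2_TH_right, rule eq2.sym2, rule eq2_TV_TId_left) (use assms in auto)
  also have "eq2 s t \<dots> (TV (TH f (TId C)) (TH g (TId C)))"
    by (rule eq2_interchange) (use assms in auto)
  finally show ?thesis
    by simp
qed

lemma eq2_whisker_left_TV:
  assumes "tc_wt f" "tc_wt g" "tc_cod f = tc_dom g" "wf1 s t C" "tgt1 s t C = src1 s t (tc_dom f)"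
  shows "eq2 s t (tc_seq [TH (TId C) (TV f g)]) (tc_seq [TH (TId C) f, TH (TId C) g])"
proof -
  have "eq2 s t (TH (TId C) (TV f g)) (TH (TV (TId C) (TId C)) (TV f g))"
    by (rule eq2_TH_left, rule eq2.sym2, rule eq2_TV_TId_left) (use assms in auto)
  also have "eq2 s t \<dots> (TV (TH (TId C) f) (TH (TId C) g))"
    by (rule eq2_interchange) (use assms in auto)
  finally show ?thesis
    by simp
qed

lemma eq2_TH_TV_right: "tc_wt f \<Longrightarrow> tc_wt g \<Longrightarrow> tc_wt h \<Longrightarrow> tc_cod g = tc_dom h \<Longrightarrow>
    tgt1 s t (tc_dom f) = src1 s t (tc_dom g) \<Longrightarrow>
   eq2 s t (tc_seq [TH f (TV g h)]) (tc_seq [TH f g, TH (TId (tc_cod f)) h])"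
proof -
  assume a: "tc_wt f" "tc_wt g" "tc_wt h" "tc_cod g = tc_dom h" "tgt1 s t (tc_dom f) = src1 s t (tc_dom g)"
  have "eq2 s t (TH f (TV g h)) (TH (TV f (TId (tc_cod f))) (TV g h))"
    by (rule eq2_TH_left, rule eq2.sym2, rule eq2_TV_TId_right) (use a in simp_all)
  also have "eq2 s t \<dots> (TV (TH f g) (TH (TId (tc_cod f)) h))"
    by (rule eq2_interchange) (use a in simp_all)
  finally show ?thesis by simp
qed

lemma eq2_TH_TV_left: "tc_wt f \<Longrightarrow> tc_wt g \<Longrightarrow> tc_wt h \<Longrightarrow> tc_cod f = tc_dom g \<Longrightarrow>
    tgt1 s t (tc_dom f) = src1 s t (tc_dom h) \<Longrightarrow>
   eq2 s t (tc_seq [TH (TV f g) h]) (tc_seq [TH f h, TH g (TId (tc_cod h))])"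
proof -
  assume a: "tc_wt f" "tc_wt g" "tc_wt h" "tc_cod f = tc_dom g" "tgt1 s t (tc_dom f) = src1 s t (tc_dom h)"
  have "eq2 s t (TH (TV f g) h) (TH (TV f g) (TV h (TId (tc_cod h))))"
    by (rule eq2_TH_right, rule eq2.sym2, rule eq2_TV_TId_right) (use a in simp_all)
  also have "eq2 s t \<dots> (TV (TH f h) (TH g (TId (tc_cod h))))"
    by (rule eq2_interchange) (use a in simp_all)
  finally show ?thesis by simp
qed

text \<open>Kelly's unit lemmas, derived from the pentagon and the triangle after whiskering with a unit,
  which can then be cancelled.\<close>

lemma eq2_TA_TR:
  assumes w: "wf1 s t X" "wf1 s t Y" "tgt1 s t X = src1 s t Y"
  shows "eq2 s t (TV (TA X Y (I (tgt1 s t Y))) (TH (TId X) (TR Y))) (TR (Cmp X Y))"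
proof -
  let ?U = "I (tgt1 s t Y)"
  let ?a = "TA X Y ?U"
  have nat_assoc: "eq2 s t (tc_seq [TH (TH (TId X) (TR Y)) (TId ?U), ?a])
                    (tc_seq [TA X (Cmp Y ?U) ?U, TH (TId X) (TH (TR Y) (TId ?U))])"
    using eq2_natA'[of "TId X" "TR Y" "TId ?U"] w by simp
  have triangle: "eq2 s t (tc_seq [TH (TId X) (TH (TR Y) (TId ?U))])
                    (tc_seq [TH (TId X) (TV (TA Y ?U ?U) (TH (TId Y) (TL ?U)))])"
    by (simp, rule eq2_TH_right, rule eq2.sym2, rule eq2.triangle) (use w in simp_all)
  have whisker: "eq2 s t (tc_seq [TH (TId X) (TV (TA Y ?U ?U) (TH (TId Y) (TL ?U)))])
                    (tc_seq [TH (TId X) (TA Y ?U ?U), TH (TId X) (TH (TId Y) (TL ?U))])"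
    using eq2_whisker_left_TV[of "TA Y ?U ?U" "TH (TId Y) (TL ?U)" X] w by simp
  have pentagon: "eq2 s t (tc_seq [TH ?a (TId ?U), TA X (Cmp Y ?U) ?U, TH (TId X) (TA Y ?U ?U)])
                    (tc_seq [TA (Cmp X Y) ?U ?U, TA X Y (Cmp ?U ?U)])"
    by (rule eq2.sym2, rule eq2_pentagon_seq) (use w in simp)
  have nat_assoc': "eq2 s t (tc_seq [TA X Y (Cmp ?U ?U), TH (TId X) (TH (TId Y) (TL ?U))])
                    (tc_seq [TH (TH (TId X) (TId Y)) (TL ?U), ?a])"
    using eq2.sym2[OF eq2_natA'[of "TId X" "TId Y" "TL ?U"]] w by simp
  have unit_Hid: "eq2 s t (tc_seq [TH (TH (TId X) (TId Y)) (TL ?U)])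
                    (tc_seq [TH (TId (Cmp X Y)) (TL ?U)])"
    by (simp, rule eq2_TH_left, rule eq2.Hid) (use w in simp_all)
  have "eq2 s t (TV (tc_seq [TH ?a (TId ?U), TH (TH (TId X) (TR Y)) (TId ?U)]) ?a)
       (tc_seq [TH ?a (TId ?U), TH (TH (TId X) (TR Y)) (TId ?U), ?a])"
    using tc_seq_append'[of "[TH ?a (TId ?U), TH (TH (TId X) (TR Y)) (TId ?U)]" "[?a]"] w by simp
  also have "eq2 s t \<dots> (tc_seq [TH ?a (TId ?U), TA X (Cmp Y ?U) ?U, TH (TId X) (TH (TR Y) (TId ?U))])"
    by (rule tc_seq_subst[OF nat_assoc, where xs="[TH ?a (TId ?U)]" and ys="[]"]) (use w in simp_all)
  also have "eq2 s t \<dots> (tc_seq [TH ?a (TId ?U), TA X (Cmp Y ?U) ?U, TH (TId X) (TV (TA Y ?U ?U) (TH (TId Y) (TL ?U)))])"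
    by (rule tc_seq_subst[OF triangle, where xs="[TH ?a (TId ?U), TA X (Cmp Y ?U) ?U]" and ys="[]"])
      (use w in simp_all)
  also have "eq2 s t \<dots> (tc_seq [TH ?a (TId ?U), TA X (Cmp Y ?U) ?U, TH (TId X) (TA Y ?U ?U), TH (TId X) (TH (TId Y) (TL ?U))])"
    by (rule tc_seq_subst[OF whisker, where xs="[TH ?a (TId ?U), TA X (Cmp Y ?U) ?U]" and ys="[]"])
      (use w in simp_all)
  also have "eq2 s t \<dots> (tc_seq [TA (Cmp X Y) ?U ?U, TA X Y (Cmp ?U ?U), TH (TId X) (TH (TId Y) (TL ?U))])"
    by (rule tc_seq_subst[OF pentagon, where xs="[]" and ys="[TH (TId X) (TH (TId Y) (TL ?U))]"])
      (use w in simp_all)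
  also have "eq2 s t \<dots> (tc_seq [TA (Cmp X Y) ?U ?U, TH (TH (TId X) (TId Y)) (TL ?U), ?a])"
    by (rule tc_seq_subst[OF nat_assoc', where xs="[TA (Cmp X Y) ?U ?U]" and ys="[]"]) (use w in simp_all)
  also have "eq2 s t \<dots> (tc_seq [TA (Cmp X Y) ?U ?U, TH (TId (Cmp X Y)) (TL ?U), ?a])"
    by (rule tc_seq_subst[OF unit_Hid, where xs="[TA (Cmp X Y) ?U ?U]" and ys="[?a]"]) (use w in simp_all)
  also have "eq2 s t \<dots> (TV (tc_seq [TA (Cmp X Y) ?U ?U, TH (TId (Cmp X Y)) (TL ?U)]) ?a)"
    using tc_seq_append[of "[TA (Cmp X Y) ?U ?U, TH (TId (Cmp X Y)) (TL ?U)]" "[?a]"] w by simp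
  finally have m: "eq2 s t (tc_seq [TH ?a (TId ?U), TH (TH (TId X) (TR Y)) (TId ?U)])
                           (tc_seq [TA (Cmp X Y) ?U ?U, TH (TId (Cmp X Y)) (TL ?U)])"
    by (rule eq2_cancel_right)
  have "eq2 s t (TH (TV ?a (TH (TId X) (TR Y))) (TId ?U))
                (tc_seq [TH ?a (TId ?U), TH (TH (TId X) (TR Y)) (TId ?U)])"
    using eq2_whisker_right_TV[of ?a "TH (TId X) (TR Y)" ?U] w by simp
  also note m
  also have "eq2 s t (tc_seq [TA (Cmp X Y) ?U ?U, TH (TId (Cmp X Y)) (TL ?U)])
                     (TH (TR (Cmp X Y)) (TId ?U))"
    using eq2.triangle[of s t "Cmp X Y" ?U] w by simp
  finally show ?thesis by (rule eq2_cancel_whisker_unit_right) simp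
qed

lemma eq2_TA_TL:
  assumes w: "wf1 s t Y" "wf1 s t Z" "tgt1 s t Y = src1 s t Z"
  shows "eq2 s t (TV (TA (I (src1 s t Y)) Y Z) (TL (Cmp Y Z))) (TH (TL Y) (TId Z))"
proof -
  let ?U = "I (src1 s t Y)"
  let ?a = "TA ?U Y Z"
  let ?h = "[TH (TA ?U ?U Y) (TId Z), TA ?U (Cmp ?U Y) Z]"
  have pentagon: "eq2 s t (tc_seq [TH (TA ?U ?U Y) (TId Z), TA ?U (Cmp ?U Y) Z, TH (TId ?U) ?a])
                    (tc_seq [TA (Cmp ?U ?U) Y Z, TA ?U ?U (Cmp Y Z)])"
    by (rule eq2.sym2, rule eq2_pentagon_seq) (use w in simp)
  have triangle: "eq2 s t (tc_seq [TA ?U ?U (Cmp Y Z), TH (TId ?U) (TL (Cmp Y Z))])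
                    (tc_seq [TH (TR ?U) (TId (Cmp Y Z))])"
    using eq2.triangle[of s t ?U "Cmp Y Z"] w by simp
  have unit_Hid: "eq2 s t (tc_seq [TH (TR ?U) (TId (Cmp Y Z))])
                    (tc_seq [TH (TR ?U) (TH (TId Y) (TId Z))])"
    by (simp, rule eq2_TH_right, rule eq2.sym2, rule eq2.Hid) (use w in simp_all)
  have nat_assoc: "eq2 s t (tc_seq [TA (Cmp ?U ?U) Y Z, TH (TR ?U) (TH (TId Y) (TId Z))])
                    (tc_seq [TH (TH (TR ?U) (TId Y)) (TId Z), ?a])"
    using eq2.sym2[OF eq2_natA'[of "TR ?U" "TId Y" "TId Z"]] w by simp
  have triangle': "eq2 s t (tc_seq [TH (TH (TR ?U) (TId Y)) (TId Z)])
                    (tc_seq [TH (TV (TA ?U ?U Y) (TH (TId ?U) (TL Y))) (TId Z)])"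
    by (simp, rule eq2_TH_left, rule eq2.sym2) (use eq2.triangle[of s t ?U Y] w in simp_all)
  have whisker: "eq2 s t (tc_seq [TH (TV (TA ?U ?U Y) (TH (TId ?U) (TL Y))) (TId Z)])
                    (tc_seq [TH (TA ?U ?U Y) (TId Z), TH (TH (TId ?U) (TL Y)) (TId Z)])"
    using eq2_whisker_right_TV[of "TA ?U ?U Y" "TH (TId ?U) (TL Y)" Z] w by simp
  have nat_assoc': "eq2 s t (tc_seq [TH (TH (TId ?U) (TL Y)) (TId Z), ?a])
                    (tc_seq [TA ?U (Cmp ?U Y) Z, TH (TId ?U) (TH (TL Y) (TId Z))])"
    using eq2_natA'[of "TId ?U" "TL Y" "TId Z"] w by simp
  have "eq2 s t (TV (tc_seq ?h) (tc_seq [TH (TId ?U) ?a, TH (TId ?U) (TL (Cmp Y Z))]))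
       (tc_seq [TH (TA ?U ?U Y) (TId Z), TA ?U (Cmp ?U Y) Z, TH (TId ?U) ?a, TH (TId ?U) (TL (Cmp Y Z))])"
    using tc_seq_append'[of ?h "[TH (TId ?U) ?a, TH (TId ?U) (TL (Cmp Y Z))]"] w by simp
  also have "eq2 s t \<dots> (tc_seq [TA (Cmp ?U ?U) Y Z, TA ?U ?U (Cmp Y Z), TH (TId ?U) (TL (Cmp Y Z))])"
    by (rule tc_seq_subst[OF pentagon, where xs="[]" and ys="[TH (TId ?U) (TL (Cmp Y Z))]"]) (use w in simp_all)
  also have "eq2 s t \<dots> (tc_seq [TA (Cmp ?U ?U) Y Z, TH (TR ?U) (TId (Cmp Y Z))])"
    by (rule tc_seq_subst[OF triangle, where xs="[TA (Cmp ?U ?U) Y Z]" and ys="[]"]) (use w in simp_all)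
  also have "eq2 s t \<dots> (tc_seq [TA (Cmp ?U ?U) Y Z, TH (TR ?U) (TH (TId Y) (TId Z))])"
    by (rule tc_seq_subst[OF unit_Hid, where xs="[TA (Cmp ?U ?U) Y Z]" and ys="[]"]) (use w in simp_all)
  also have "eq2 s t \<dots> (tc_seq [TH (TH (TR ?U) (TId Y)) (TId Z), ?a])"
    by (rule tc_seq_subst[OF nat_assoc, where xs="[]" and ys="[]"]) (use w in simp_all)
  also have "eq2 s t \<dots> (tc_seq [TH (TV (TA ?U ?U Y) (TH (TId ?U) (TL Y))) (TId Z), ?a])"
    by (rule tc_seq_subst[OF triangle', where xs="[]" and ys="[?a]"]) (use w in simp_all)
  also have "eq2 s t \<dots> (tc_seq [TH (TA ?U ?U Y) (TId Z), TH (TH (TId ?U) (TL Y)) (TId Z), ?a])"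
    by (rule tc_seq_subst[OF whisker, where xs="[]" and ys="[?a]"]) (use w in simp_all)
  also have "eq2 s t \<dots> (tc_seq [TH (TA ?U ?U Y) (TId Z), TA ?U (Cmp ?U Y) Z, TH (TId ?U) (TH (TL Y) (TId Z))])"
    by (rule tc_seq_subst[OF nat_assoc', where xs="[TH (TA ?U ?U Y) (TId Z)]" and ys="[]"]) (use w in simp_all)
  also have "eq2 s t \<dots> (TV (tc_seq ?h) (tc_seq [TH (TId ?U) (TH (TL Y) (TId Z))]))"
    using tc_seq_append[of ?h "[TH (TId ?U) (TH (TL Y) (TId Z))]"] w by simp
  finally have m: "eq2 s t (tc_seq [TH (TId ?U) ?a, TH (TId ?U) (TL (Cmp Y Z))])
                           (TH (TId ?U) (TH (TL Y) (TId Z)))"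
    by (auto dest: eq2_cancel_left)
  have "eq2 s t (TH (TId ?U) (TV ?a (TL (Cmp Y Z))))
                (tc_seq [TH (TId ?U) ?a, TH (TId ?U) (TL (Cmp Y Z))])"
    using eq2_whisker_left_TV[of ?a "TL (Cmp Y Z)" ?U] w by simp
  also note m
  finally show ?thesis by (rule eq2_cancel_whisker_unit_left) simp
qed

lemma eq2_TL_I_TR_I: "eq2 s t (TL (I v)) (TR (I v))"
proof -
  let ?U = "I v"
  have "eq2 s t (TV (TH (TId ?U) (TL ?U)) (TL ?U)) (TV (TL (Cmp ?U ?U)) (TL ?U))"
    using eq2_natL'[of "TL ?U"] by simp
  then have natL: "eq2 s t (TH (TId ?U) (TL ?U)) (TL (Cmp ?U ?U))" by (rule eq2_cancel_right)
  have "eq2 s t (TH (TL ?U) (TId ?U)) (TV (TA ?U ?U ?U) (TL (Cmp ?U ?U)))"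
    using eq2_TA_TL[of ?U ?U] by (simp add: eq2.sym2)
  also have "eq2 s t \<dots> (TV (TA ?U ?U ?U) (TH (TId ?U) (TL ?U)))"
    by (rule eq2_TV_right, rule eq2.sym2, rule natL) simp_all
  also have "eq2 s t \<dots> (TH (TR ?U) (TId ?U))"
    using eq2.triangle[of s t ?U ?U] by simp
  finally show ?thesis by (rule eq2_cancel_whisker_unit_right) simp
qed

fun nf :: "'e list \<Rightarrow> 'v \<Rightarrow> ('v, 'e) cell" where
  "nf [] v = I v" | "nf (x#xs) v = Cmp (E x) (nf xs v)"

fun nf_merge :: "'e list \<Rightarrow> 'v \<Rightarrow> 'e list \<Rightarrow> 'v \<Rightarrow> ('v, 'e) tc" where
  "nf_merge [] v ys w = TL (nf ys w)"
| "nf_merge (x#xs) v ys w = TV (TA (E x) (nf xs v) (nf ys w)) (TH (TId (E x)) (nf_merge xs v ys w))"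

lemma nf_letters[simp]: "letters (nf xs v) = xs" by (induction xs) auto
lemma nf_tgt[simp]: "tgt1 s t (nf xs v) = v" by (induction xs) auto
lemma nf_src_append[simp]: "src1 s t (nf (xs @ ys) w) = src1 s t (nf xs (src1 s t (nf ys w)))"
  by (induction xs) auto
lemma nf_wf_append[simp]: "wf1 s t (nf (xs @ ys) w) = (wf1 s t (nf xs (src1 s t (nf ys w))) \<and> wf1 s t (nf ys w))"
  by (induction xs) auto

lemma nf_merge_typ: "wf1 s t (nf xs v) \<Longrightarrow> wf1 s t (nf ys w) \<Longrightarrow> v = src1 s t (nf ys w) \<Longrightarrow>
  tc_wt (nf_merge xs v ys w) \<and> tc_dom (nf_merge xs v ys w) = Cmp (nf xs v) (nf ys w) \<and> tc_cod (nf_merge xs v ys w) = nf (xs @ ys) w"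
  by (induction xs) auto

lemma nf_merge_wt[simp]: "wf1 s t (nf xs v) \<Longrightarrow> wf1 s t (nf ys w) \<Longrightarrow> v = src1 s t (nf ys w) \<Longrightarrow>
    tc_wt (nf_merge xs v ys w)"
  using nf_merge_typ by blast
lemma nf_merge_dom[simp]: "wf1 s t (nf xs v) \<Longrightarrow> wf1 s t (nf ys w) \<Longrightarrow> v = src1 s t (nf ys w) \<Longrightarrow>
    tc_dom (nf_merge xs v ys w) = Cmp (nf xs v) (nf ys w)"
  using nf_merge_typ by blast
lemma nf_merge_cod[simp]: "wf1 s t (nf xs v) \<Longrightarrow> wf1 s t (nf ys w) \<Longrightarrow> v = src1 s t (nf ys w) \<Longrightarrow>
    tc_cod (nf_merge xs v ys w) = nf (xs @ ys) w"
  using nf_merge_typ by blast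

lemma nf_merge_Nil: "wf1 s t (nf xs w) \<Longrightarrow> eq2 s t (nf_merge xs w [] w) (TR (nf xs w))"
proof (induction xs)
  case Nil then show ?case using eq2_TL_I_TR_I[of w] by simp
next
  case (Cons x xs)
  have w: "wf1 s t (nf xs w)" "t x = src1 s t (nf xs w)" using Cons by auto
  have "eq2 s t (nf_merge (x#xs) w [] w)
                (TV (TA (E x) (nf xs w) (I w)) (TH (TId (E x)) (TR (nf xs w))))"
    by (simp, intro eq2_TV_right eq2_TH_right) (use Cons w nf_merge_typ[of xs w "[]" w] in auto)
  also have "eq2 s t \<dots> (TR (nf (x#xs) w))"
    using eq2_TA_TR[of "E x" "nf xs w"] w by simp
  finally show ?case .
qed

lemma nf_merge_assoc_Nil:
  assumes wz: "wf1 s t (nf zs w)" and hv: "v = src1 s t (nf zs w)" and wy: "wf1 s t (nf ys v)"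
    and hu: "u = src1 s t (nf ys v)"
  shows "eq2 s t (tc_seq [TA (I u) (nf ys v) (nf zs w), TH (TId (I u)) (nf_merge ys v zs w),
                          nf_merge [] u (ys @ zs) w])
                 (tc_seq [TH (nf_merge [] u ys v) (TId (nf zs w)), nf_merge ys v zs w])"
proof -
  let ?Y = "nf ys v" and ?Z = "nf zs w" and ?U = "I u"
  let ?m = "nf_merge ys v zs w"
  have natL: "eq2 s t (tc_seq [TH (TId ?U) ?m, TL (nf (ys @ zs) w)]) (tc_seq [TL (Cmp ?Y ?Z), ?m])"
    using eq2_natL'[of ?m] wz hv wy hu by simp
  have kelly: "eq2 s t (tc_seq [TA ?U ?Y ?Z, TL (Cmp ?Y ?Z)]) (tc_seq [TH (TL ?Y) (TId ?Z)])"
    using eq2_TA_TL[of ?Y ?Z] wz hv wy hu by simp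
  have "eq2 s t (tc_seq [TA ?U ?Y ?Z, TH (TId ?U) ?m, TL (nf (ys @ zs) w)])
                (tc_seq [TA ?U ?Y ?Z, TL (Cmp ?Y ?Z), ?m])"
    by (rule tc_seq_subst[OF natL, where xs="[TA ?U ?Y ?Z]" and ys="[]"]) (use wz hv wy hu in simp_all)
  also have "eq2 s t \<dots> (tc_seq [TH (TL ?Y) (TId ?Z), ?m])"
    by (rule tc_seq_subst[OF kelly, where xs="[]" and ys="[?m]"]) (use wz hv wy hu in simp_all)
  finally show ?thesis
    by simp
qed

lemma nf_merge_assoc_Cons:
  assumes ws: "wf1 s t (nf zs w)" "v = src1 s t (nf zs w)" "wf1 s t (nf ys v)"
      "u = src1 s t (nf ys v)" "wf1 s t (nf xs u)" "t x = src1 s t (nf xs u)"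
    and ih: "eq2 s t (tc_seq [TA (nf xs u) (nf ys v) (nf zs w), TH (TId (nf xs u)) (nf_merge ys v zs w),
                              nf_merge xs u (ys @ zs) w])
                     (tc_seq [TH (nf_merge xs u ys v) (TId (nf zs w)), nf_merge (xs @ ys) v zs w])"
  shows "eq2 s t (tc_seq [TA (Cmp (E x) (nf xs u)) (nf ys v) (nf zs w),
                          TH (TId (Cmp (E x) (nf xs u))) (nf_merge ys v zs w), nf_merge (x # xs) u (ys @ zs) w])
                 (tc_seq [TH (nf_merge (x # xs) u ys v) (TId (nf zs w)), nf_merge ((x # xs) @ ys) v zs w])"
proof -
  let ?X = "nf xs u" and ?Y = "nf ys v" and ?Z = "nf zs w" and ?M = "E x"
  let ?m = "nf_merge ys v zs w" and ?m1 = "nf_merge xs u (ys @ zs) w" and ?mXY = "nf_merge xs u ys v"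
  let ?m2 = "nf_merge (xs @ ys) v zs w" and ?YZ = "nf (ys @ zs) w"
  have unfold_merge: "eq2 s t (tc_seq [nf_merge (x#xs) u (ys @ zs) w])
                    (tc_seq [TA ?M ?X ?YZ, TH (TId ?M) ?m1])"
    by (simp, rule eq2_refl) (use ws in simp)
  have unit_Hid: "eq2 s t (tc_seq [TH (TId (Cmp ?M ?X)) ?m]) (tc_seq [TH (TH (TId ?M) (TId ?X)) ?m])"
    by (simp, rule eq2_TH_left, rule eq2.sym2, rule eq2.Hid) (use ws in simp_all)
  have nat_assoc: "eq2 s t (tc_seq [TH (TH (TId ?M) (TId ?X)) ?m, TA ?M ?X ?YZ])
                    (tc_seq [TA ?M ?X (Cmp ?Y ?Z), TH (TId ?M) (TH (TId ?X) ?m)])"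
    by (rule eq2_natA_seq) (use ws in simp_all)
  have pentagon: "eq2 s t (tc_seq [TA (Cmp ?M ?X) ?Y ?Z, TA ?M ?X (Cmp ?Y ?Z)])
     (tc_seq [TH (TA ?M ?X ?Y) (TId ?Z), TA ?M (Cmp ?X ?Y) ?Z, TH (TId ?M) (TA ?X ?Y ?Z)])"
    by (rule eq2_pentagon_seq) (use ws in simp)
  have whisker: "eq2 s t (tc_seq [TH (TId ?M) (TH (TId ?X) ?m), TH (TId ?M) ?m1])
                    (tc_seq [TH (TId ?M) (TV (TH (TId ?X) ?m) ?m1)])"
    by (rule eq2.sym2, rule eq2_whisker_left_TV) (use ws in simp_all)
  have whisker': "eq2 s t (tc_seq [TH (TId ?M) (TA ?X ?Y ?Z), TH (TId ?M) (TV (TH (TId ?X) ?m) ?m1)])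
                    (tc_seq [TH (TId ?M) (TV (TA ?X ?Y ?Z) (TV (TH (TId ?X) ?m) ?m1))])"
    by (rule eq2.sym2, rule eq2_whisker_left_TV) (use ws in simp_all)
  have ih': "eq2 s t (TV (TA ?X ?Y ?Z) (TV (TH (TId ?X) ?m) ?m1)) (TV (TH ?mXY (TId ?Z)) ?m2)"
    using ih by (simp only: tc_seq.simps)
  have ih_whiskered: "eq2 s t (tc_seq [TH (TId ?M) (TV (TA ?X ?Y ?Z) (TV (TH (TId ?X) ?m) ?m1))])
                    (tc_seq [TH (TId ?M) (TV (TH ?mXY (TId ?Z)) ?m2)])"
    by (simp only: tc_seq.simps(2), rule eq2_TH_right[OF ih']) (use ws in simp_all)
  have unwhisker: "eq2 s t (tc_seq [TH (TId ?M) (TV (TH ?mXY (TId ?Z)) ?m2)])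
                    (tc_seq [TH (TId ?M) (TH ?mXY (TId ?Z)), TH (TId ?M) ?m2])"
    by (rule eq2_whisker_left_TV) (use ws in simp_all)
  have nat_assoc': "eq2 s t (tc_seq [TA ?M (Cmp ?X ?Y) ?Z, TH (TId ?M) (TH ?mXY (TId ?Z))])
                    (tc_seq [TH (TH (TId ?M) ?mXY) (TId ?Z), TA ?M (nf (xs @ ys) v) ?Z])"
    by (rule eq2.sym2, rule eq2_natA_seq) (use ws in simp_all)
  have whisker_right: "eq2 s t (tc_seq [TH (TA ?M ?X ?Y) (TId ?Z), TH (TH (TId ?M) ?mXY) (TId ?Z)])
                    (tc_seq [TH (TV (TA ?M ?X ?Y) (TH (TId ?M) ?mXY)) (TId ?Z)])"
    by (rule eq2.sym2, rule eq2_whisker_right_TV) (use ws in simp_all)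
  have fold_merge: "eq2 s t (tc_seq [TA ?M (nf (xs @ ys) v) ?Z, TH (TId ?M) ?m2])
                     (tc_seq [nf_merge ((x#xs) @ ys) v zs w])"
    by (simp, rule eq2_refl) (use ws in simp)
  have "eq2 s t (tc_seq [TA (Cmp ?M ?X) ?Y ?Z, TH (TId (Cmp ?M ?X)) ?m, nf_merge (x#xs) u (ys @ zs) w])
      (tc_seq [TA (Cmp ?M ?X) ?Y ?Z, TH (TId (Cmp ?M ?X)) ?m, TA ?M ?X ?YZ, TH (TId ?M) ?m1])"
    by (rule tc_seq_subst[OF unfold_merge, where xs="[TA (Cmp ?M ?X) ?Y ?Z, TH (TId (Cmp ?M ?X)) ?m]" and ys="[]"])
      (use ws in simp_all)
  also have "eq2 s t \<dots> (tc_seq [TA (Cmp ?M ?X) ?Y ?Z, TH (TH (TId ?M) (TId ?X)) ?m, TA ?M ?X ?YZ, TH (TId ?M) ?m1])"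
    by (rule tc_seq_subst[OF unit_Hid, where xs="[TA (Cmp ?M ?X) ?Y ?Z]" and ys="[TA ?M ?X ?YZ, TH (TId ?M) ?m1]"])
      (use ws in simp_all)
  also have "eq2 s t \<dots> (tc_seq [TA (Cmp ?M ?X) ?Y ?Z, TA ?M ?X (Cmp ?Y ?Z), TH (TId ?M) (TH (TId ?X) ?m), TH (TId ?M) ?m1])"
    by (rule tc_seq_subst[OF nat_assoc, where xs="[TA (Cmp ?M ?X) ?Y ?Z]" and ys="[TH (TId ?M) ?m1]"])
      (use ws in simp_all)
  also have "eq2 s t \<dots> (tc_seq [TH (TA ?M ?X ?Y) (TId ?Z), TA ?M (Cmp ?X ?Y) ?Z, TH (TId ?M) (TA ?X ?Y ?Z), TH (TId ?M) (TH (TId ?X) ?m), TH (TId ?M) ?m1])"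
    by (rule tc_seq_subst[OF pentagon, where xs="[]" and ys="[TH (TId ?M) (TH (TId ?X) ?m), TH (TId ?M) ?m1]"])
      (use ws in simp_all)
  also have "eq2 s t \<dots> (tc_seq [TH (TA ?M ?X ?Y) (TId ?Z), TA ?M (Cmp ?X ?Y) ?Z, TH (TId ?M) (TA ?X ?Y ?Z), TH (TId ?M) (TV (TH (TId ?X) ?m) ?m1)])"
    by (rule tc_seq_subst[OF whisker, where xs="[TH (TA ?M ?X ?Y) (TId ?Z), TA ?M (Cmp ?X ?Y) ?Z, TH (TId ?M) (TA ?X ?Y ?Z)]" and ys="[]"])
      (use ws in simp_all)
  also have "eq2 s t \<dots> (tc_seq [TH (TA ?M ?X ?Y) (TId ?Z), TA ?M (Cmp ?X ?Y) ?Z, TH (TId ?M) (TV (TA ?X ?Y ?Z) (TV (TH (TId ?X) ?m) ?m1))])"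
    by (rule tc_seq_subst[OF whisker', where xs="[TH (TA ?M ?X ?Y) (TId ?Z), TA ?M (Cmp ?X ?Y) ?Z]" and ys="[]"])
      (use ws in simp_all)
  also have "eq2 s t \<dots> (tc_seq [TH (TA ?M ?X ?Y) (TId ?Z), TA ?M (Cmp ?X ?Y) ?Z, TH (TId ?M) (TV (TH ?mXY (TId ?Z)) ?m2)])"
    by (rule tc_seq_subst[OF ih_whiskered, where xs="[TH (TA ?M ?X ?Y) (TId ?Z), TA ?M (Cmp ?X ?Y) ?Z]" and ys="[]"])
      (use ws in simp_all)
  also have "eq2 s t \<dots> (tc_seq [TH (TA ?M ?X ?Y) (TId ?Z), TA ?M (Cmp ?X ?Y) ?Z, TH (TId ?M) (TH ?mXY (TId ?Z)), TH (TId ?M) ?m2])"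
    by (rule tc_seq_subst[OF unwhisker, where xs="[TH (TA ?M ?X ?Y) (TId ?Z), TA ?M (Cmp ?X ?Y) ?Z]" and ys="[]"])
      (use ws in simp_all)
  also have "eq2 s t \<dots> (tc_seq [TH (TA ?M ?X ?Y) (TId ?Z), TH (TH (TId ?M) ?mXY) (TId ?Z), TA ?M (nf (xs @ ys) v) ?Z, TH (TId ?M) ?m2])"
    by (rule tc_seq_subst[OF nat_assoc', where xs="[TH (TA ?M ?X ?Y) (TId ?Z)]" and ys="[TH (TId ?M) ?m2]"])
      (use ws in simp_all)
  also have "eq2 s t \<dots> (tc_seq [TH (TV (TA ?M ?X ?Y) (TH (TId ?M) ?mXY)) (TId ?Z), TA ?M (nf (xs @ ys) v) ?Z, TH (TId ?M) ?m2])"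
    by (rule tc_seq_subst[OF whisker_right, where xs="[]" and ys="[TA ?M (nf (xs @ ys) v) ?Z, TH (TId ?M) ?m2]"])
      (use ws in simp_all)
  also have "eq2 s t \<dots> (tc_seq [TH (TV (TA ?M ?X ?Y) (TH (TId ?M) ?mXY)) (TId ?Z), nf_merge ((x#xs) @ ys) v zs w])"
    by (rule tc_seq_subst[OF fold_merge, where xs="[TH (TV (TA ?M ?X ?Y) (TH (TId ?M) ?mXY)) (TId ?Z)]" and ys="[]"])
      (use ws in simp_all)
  finally show ?thesis
    by simp
qed

lemma nf_merge_assoc:
  assumes "wf1 s t (nf zs w)" "v = src1 s t (nf zs w)" "wf1 s t (nf ys v)" "u = src1 s t (nf ys v)"
    and "wf1 s t (nf xs u)"
  shows "eq2 s t (tc_seq [TA (nf xs u) (nf ys v) (nf zs w), TH (TId (nf xs u)) (nf_merge ys v zs w),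
                          nf_merge xs u (ys @ zs) w])
                 (tc_seq [TH (nf_merge xs u ys v) (TId (nf zs w)), nf_merge (xs @ ys) v zs w])"
  using assms(5)
proof (induction xs)
  case Nil
  then show ?case
    using nf_merge_assoc_Nil[OF assms(1-4)] by simp
next
  case (Cons x xs)
  then show ?case
    using nf_merge_assoc_Cons[OF assms(1-4), of xs x] by simp
qed

fun nf_can :: "('v, 'e) cell \<Rightarrow> ('v, 'e) tc" where
  "nf_can (E e) = TRi (E e)"
| "nf_can (I v) = TId (I v)"
| "nf_can (Cmp A B) = TV (TH (nf_can A) (nf_can B)) (nf_merge (letters A) (tgt1 s t A) (letters B) (tgt1 s t B))"

lemma nf_can_typ: "wf1 s t A \<Longrightarrow>
    tc_wt (nf_can A) \<and> tc_dom (nf_can A) = A \<and> tc_cod (nf_can A) = nf (letters A) (tgt1 s t A)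
   \<and> wf1 s t (nf (letters A) (tgt1 s t A)) \<and> src1 s t (nf (letters A) (tgt1 s t A)) = src1 s t A"
  by (induction A) auto

lemma nf_can_simps[simp]: "wf1 s t A \<Longrightarrow> tc_wt (nf_can A)" "wf1 s t A \<Longrightarrow> tc_dom (nf_can A) = A"
  "wf1 s t A \<Longrightarrow> tc_cod (nf_can A) = nf (letters A) (tgt1 s t A)"
  "wf1 s t A \<Longrightarrow> wf1 s t (nf (letters A) (tgt1 s t A))"
  "wf1 s t A \<Longrightarrow> src1 s t (nf (letters A) (tgt1 s t A)) = src1 s t A"
  using nf_can_typ by blast+

lemma nf_can_TA:
  assumes w: "wf1 s t A" "wf1 s t B" "wf1 s t C" "src1 s t B = tgt1 s t A" "src1 s t C = tgt1 s t B"
  shows "eq2 s t (TV (TA A B C) (nf_can (Cmp A (Cmp B C)))) (nf_can (Cmp (Cmp A B) C))"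
proof -
  let ?cA = "nf_can A" and ?cB = "nf_can B" and ?cC = "nf_can C"
  let ?nA = "nf (letters A) (tgt1 s t A)" and ?nB = "nf (letters B) (tgt1 s t B)" and ?nC = "nf (letters C) (tgt1 s t C)"
  let ?mBC = "nf_merge (letters B) (tgt1 s t B) (letters C) (tgt1 s t C)"
  let ?mABC = "nf_merge (letters A) (tgt1 s t A) (letters B @ letters C) (tgt1 s t C)"
  let ?mAB = "nf_merge (letters A) (tgt1 s t A) (letters B) (tgt1 s t B)"
  let ?mAB_C = "nf_merge (letters A @ letters B) (tgt1 s t B) (letters C) (tgt1 s t C)"
  have interchange: "eq2 s t (tc_seq [TH ?cA (TV (TH ?cB ?cC) ?mBC)])
                    (tc_seq [TH ?cA (TH ?cB ?cC), TH (TId ?nA) ?mBC])"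
    using eq2_TH_TV_right[of ?cA "TH ?cB ?cC" ?mBC] w by simp
  have nat_assoc: "eq2 s t (tc_seq [TA A B C, TH ?cA (TH ?cB ?cC)])
                    (tc_seq [TH (TH ?cA ?cB) ?cC, TA ?nA ?nB ?nC])"
    by (rule eq2.sym2, rule eq2_natA_seq) (use w in simp_all)
  have merge_assoc: "eq2 s t (tc_seq [TA ?nA ?nB ?nC, TH (TId ?nA) ?mBC, ?mABC])
                    (tc_seq [TH ?mAB (TId ?nC), ?mAB_C])"
    by (rule nf_merge_assoc) (use w in simp_all)
  have interchange': "eq2 s t (tc_seq [TH (TH ?cA ?cB) ?cC, TH ?mAB (TId ?nC)])
                    (tc_seq [TH (TV (TH ?cA ?cB) ?mAB) ?cC])"
    using eq2.sym2[OF eq2_TH_TV_left[of "TH ?cA ?cB" ?mAB ?cC]] w by simp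
  have "eq2 s t (TV (TA A B C) (nf_can (Cmp A (Cmp B C))))
                (tc_seq [TA A B C, TH ?cA (TV (TH ?cB ?cC) ?mBC), ?mABC])"
    by (simp, rule eq2_refl) (use w in simp)
  also have "eq2 s t \<dots> (tc_seq [TA A B C, TH ?cA (TH ?cB ?cC), TH (TId ?nA) ?mBC, ?mABC])"
    by (rule tc_seq_subst[OF interchange, where xs="[TA A B C]" and ys="[?mABC]"]) (use w in simp_all)
  also have "eq2 s t \<dots> (tc_seq [TH (TH ?cA ?cB) ?cC, TA ?nA ?nB ?nC, TH (TId ?nA) ?mBC, ?mABC])"
    by (rule tc_seq_subst[OF nat_assoc, where xs="[]" and ys="[TH (TId ?nA) ?mBC, ?mABC]"]) (use w in simp_all)
  also have "eq2 s t \<dots> (tc_seq [TH (TH ?cA ?cB) ?cC, TH ?mAB (TId ?nC), ?mAB_C])"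
    by (rule tc_seq_subst[OF merge_assoc, where xs="[TH (TH ?cA ?cB) ?cC]" and ys="[]"]) (use w in simp_all)
  also have "eq2 s t \<dots> (tc_seq [TH (TV (TH ?cA ?cB) ?mAB) ?cC, ?mAB_C])"
    by (rule tc_seq_subst[OF interchange', where xs="[]" and ys="[?mAB_C]"]) (use w in simp_all)
  finally show ?thesis by simp
qed

lemma nf_can_TL: "wf1 s t A \<Longrightarrow> eq2 s t (TV (TL A) (nf_can A)) (nf_can (Cmp (I (src1 s t A)) A))"
  using eq2.sym2[OF eq2_natL'[of "nf_can A"]] by simp

lemma nf_can_TR: "wf1 s t A \<Longrightarrow> eq2 s t (TV (TR A) (nf_can A)) (nf_can (Cmp A (I (tgt1 s t A))))"
proof -
  assume w: "wf1 s t A"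
  have "eq2 s t (TV (TR A) (nf_can A))
                (TV (TH (nf_can A) (TId (I (tgt1 s t A)))) (TR (nf (letters A) (tgt1 s t A))))"
    using eq2.sym2[OF eq2_natR'[of "nf_can A"]] w by simp
  also have "eq2 s t \<dots> (TV (TH (nf_can A) (TId (I (tgt1 s t A))))
                             (nf_merge (letters A) (tgt1 s t A) [] (tgt1 s t A)))"
    by (rule eq2_TV_right, rule eq2.sym2, rule nf_merge_Nil) (use w in simp_all)
  finally show ?thesis
    by simp
qed

lemma nf_can_natural_inverse:
  assumes f: "tc_wt f" "tc_dom f = X" "tc_cod f = Y"
    and g: "eq2 s t (TV g (nf_can X)) (nf_can Y)" and inverse: "eq2 s t (TV f g) (TId X)"
  shows "eq2 s t (TV f (nf_can Y)) (nf_can X)"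
proof -
  have wt: "wf1 s t X" "wf1 s t Y" "tc_wt g" "tc_dom g = Y" "tc_cod g = X"
    using f eq2_parallel[OF g] eq2_parallel[OF inverse] by auto
  have "eq2 s t (TV f (nf_can Y)) (TV f (TV g (nf_can X)))"
    by (rule eq2_TV_right[OF eq2.sym2[OF g]]) (use f wt in simp_all)
  also have "eq2 s t \<dots> (TV (TV f g) (nf_can X))"
    by (rule eq2.sym2, rule eq2_TV_assoc) (use f wt in simp_all)
  also have "eq2 s t \<dots> (TV (TId X) (nf_can X))"
    by (rule eq2_TV_left[OF inverse]) (use wt in simp_all)
  also have "eq2 s t \<dots> (nf_can X)"
    by (rule eq2_TV_TId_left) (use wt in simp_all)
  finally show ?thesis .
qed

lemma nf_can_natural: "tc_wt f \<Longrightarrow> eq2 s t (TV f (nf_can (tc_cod f))) (nf_can (tc_dom f))"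
proof (induction f)
  case (TId A)
  then show ?case
    by (auto intro: eq2_TV_TId_left)
next
  case (TA A B C)
  then show ?case
    using nf_can_TA[of A B C] by simp
next
  case (TAi A B C)
  then show ?case
    by (simp only: tc_dom.simps tc_cod.simps, rule nf_can_natural_inverse[OF _ _ _ nf_can_TA eq2.invA2])
      (use TAi in auto)
next
  case (TL A)
  then show ?case
    using nf_can_TL by simp
next
  case (TLi A)
  then show ?case
    by (simp only: tc_dom.simps tc_cod.simps, rule nf_can_natural_inverse[OF _ _ _ nf_can_TL eq2.invL2])
      (use TLi in auto)
next
  case (TR A)
  then show ?case
    using nf_can_TR by simp
next
  case (TRi A)
  then show ?case
    by (simp only: tc_dom.simps tc_cod.simps, rule nf_can_natural_inverse[OF _ _ _ nf_can_TR eq2.invR2])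
      (use TRi in auto)
next
  case (TH f g)
  have w: "tc_wt f" "tc_wt g" "tgt1 s t (tc_dom f) = src1 s t (tc_dom g)"
    using TH by auto
  then have nf: "wf1 s t (nf (letters (tc_dom f)) (tgt1 s t (tc_dom f)))"
    "src1 s t (nf (letters (tc_dom f)) (tgt1 s t (tc_dom f))) = src1 s t (tc_dom f)"
    "wf1 s t (nf (letters (tc_dom g)) (tgt1 s t (tc_dom g)))"
    "src1 s t (nf (letters (tc_dom g)) (tgt1 s t (tc_dom g))) = src1 s t (tc_dom g)"
    using nf_can_simps(4,5) tc_wt_simps(5) by blast+
  let ?m = "nf_merge (letters (tc_dom f)) (tgt1 s t (tc_dom f)) (letters (tc_dom g)) (tgt1 s t (tc_dom g))"
  have "eq2 s t (TV (TH f g) (nf_can (tc_cod (TH f g))))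
                (TV (TH f g) (TV (TH (nf_can (tc_cod f)) (nf_can (tc_cod g))) ?m))"
    using w nf by (simp add: eq2_refl)
  also have "eq2 s t \<dots> (TV (TV (TH f g) (TH (nf_can (tc_cod f)) (nf_can (tc_cod g)))) ?m)"
    by (rule eq2.sym2, rule eq2_TV_assoc) (use w nf in simp_all)
  also have "eq2 s t \<dots> (TV (TH (TV f (nf_can (tc_cod f))) (TV g (nf_can (tc_cod g)))) ?m)"
    by (rule eq2_TV_left, rule eq2.sym2, rule eq2_interchange) (use w nf in simp_all)
  also have "eq2 s t \<dots> (TV (TH (nf_can (tc_dom f)) (nf_can (tc_dom g))) ?m)"
    by (rule eq2_TV_left, rule eq2_TH) (use w nf TH in simp_all)
  finally show ?case by simp
next
  case (TV f g)
  have w: "tc_wt f" "tc_wt g" "tc_cod f = tc_dom g" using TV by auto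
  have "eq2 s t (TV (TV f g) (nf_can (tc_cod g))) (TV f (TV g (nf_can (tc_cod g))))"
    by (rule eq2_TV_assoc) (use w in simp_all)
  also have "eq2 s t \<dots> (TV f (nf_can (tc_dom g)))"
    by (rule eq2_TV_right) (use w TV in simp_all)
  also have "eq2 s t \<dots> (nf_can (tc_dom f))"
    using TV w by simp
  finally show ?case by simp
qed

lemma eq2_through_nf: "tc_wt h \<Longrightarrow> eq2 s t h (TV (nf_can (tc_dom h)) (tc_inv (nf_can (tc_cod h))))"
proof -
  assume h: "tc_wt h"
  let ?c = "nf_can (tc_cod h)"
  note inv = tc_inv_typ[of ?c] tc_inv_inverse[of ?c]
  have "eq2 s t h (TV h (TV ?c (tc_inv ?c)))"
    by (rule eq2.sym2, rule eq2.trans2[OF eq2_TV_right eq2_TV_TId_right]) (use h inv in simp_all)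
  also have "eq2 s t \<dots> (TV (TV h ?c) (tc_inv ?c))"
    by (rule eq2.sym2, rule eq2_TV_assoc) (use h inv in simp_all)
  also have "eq2 s t \<dots> (TV (nf_can (tc_dom h)) (tc_inv ?c))"
    by (rule eq2_TV_left, rule nf_can_natural) (use h inv in simp_all)
  finally show ?thesis .
qed

theorem eq2_coherence: "tc_wt f \<Longrightarrow> tc_wt g \<Longrightarrow> tc_dom f = tc_dom g \<Longrightarrow> tc_cod f = tc_cod g \<Longrightarrow> eq2 s t f g"
  using eq2_through_nf[of f] eq2_through_nf[of g] by (metis eq2.sym2 eq2.trans2)

section \<open>The shadow category\<close>

fun sm_dom :: "('v, 'e) sm \<Rightarrow> ('v, 'e) cell"
  and sm_cod :: "('v, 'e) sm \<Rightarrow> ('v, 'e) cell" where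
  "sm_dom (SSh f) = tc_dom f"
| "sm_dom (SRot A B) = Cmp A B"
| "sm_dom (SComp f g) = sm_dom f"
| "sm_cod (SSh f) = tc_cod f"
| "sm_cod (SRot A B) = Cmp B A"
| "sm_cod (SComp f g) = sm_cod g"

fun sm_wt :: "('v, 'e) sm \<Rightarrow> bool" where
  "sm_wt (SSh f) = (tc_wt f \<and> endo s t (tc_dom f))"
| "sm_wt (SRot A B) = endo s t (Cmp A B)"
| "sm_wt (SComp f g) = (sm_wt f \<and> sm_wt g \<and> sm_cod f = sm_dom g)"

lemma sm_wt_endo: "sm_wt f \<Longrightarrow> endo s t (sm_dom f) \<and> endo s t (sm_cod f)"
  by (induction f) (auto simp: endo_def)

lemma sm_wt_simps [simp]:
  "sm_wt f \<Longrightarrow> wf1 s t (sm_dom f)"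
  "sm_wt f \<Longrightarrow> wf1 s t (sm_cod f)"
  "sm_wt f \<Longrightarrow> src1 s t (sm_dom f) = tgt1 s t (sm_dom f)"
  "sm_wt f \<Longrightarrow> src1 s t (sm_cod f) = tgt1 s t (sm_cod f)"
  using sm_wt_endo[of f] by (auto simp: endo_def)

lemma sm_typ_iff: "sm_typ s t f A B \<longleftrightarrow> sm_wt f \<and> sm_dom f = A \<and> sm_cod f = B"
proof
  assume "sm_typ s t f A B"
  then show "sm_wt f \<and> sm_dom f = A \<and> sm_cod f = B"
    by induction (auto simp: tc_typ_iff)
next
  show "sm_wt f \<and> sm_dom f = A \<and> sm_cod f = B \<Longrightarrow> sm_typ s t f A B"
    by (induction f arbitrary: A B) (auto intro: sm_typ.intros simp: tc_typ_iff)
qed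

lemma eqS_parallel: "eqS s t f g \<Longrightarrow> sm_wt f \<and> sm_wt g \<and> sm_dom f = sm_dom g \<and> sm_cod f = sm_cod g"
proof (induction rule: eqS.induct)
  case (congSh f g A B)
  then show ?case
    using eq2_parallel[OF congSh(1)] by (auto simp: tc_typ_iff)
qed (auto simp: sm_typ_iff tc_typ_iff endo_def)

declare eqS.transS [trans]

lemma eqS_refl: "sm_wt f \<Longrightarrow> eqS s t f f"
  using eqS.reflS sm_typ_iff by blast

lemma eqS_SComp: "eqS s t f f' \<Longrightarrow> eqS s t g g' \<Longrightarrow> sm_cod f = sm_dom g \<Longrightarrow>
    eqS s t (SComp f g) (SComp f' g')"
  by (rule eqS.congC)
    (use eqS_parallel[of f f'] eqS_parallel[of g g'] in \<open>auto simp: sm_typ_iff\<close>)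

lemma eqS_SComp_assoc:
  "sm_wt f \<Longrightarrow> sm_wt g \<Longrightarrow> sm_wt h \<Longrightarrow> sm_cod f = sm_dom g \<Longrightarrow> sm_cod g = sm_dom h \<Longrightarrow>
     eqS s t (SComp (SComp f g) h) (SComp f (SComp g h))"
  by (rule eqS.assocS) (auto simp: sm_typ_iff)

lemma eqS_SComp_TId_left: "sm_wt f \<Longrightarrow> A = sm_dom f \<Longrightarrow> eqS s t (SComp (SSh (TId A)) f) f"
  by (rule eqS.idLS) (auto simp: sm_typ_iff)

lemma eqS_SComp_TId_right: "sm_wt f \<Longrightarrow> B = sm_cod f \<Longrightarrow> eqS s t (SComp f (SSh (TId B))) f"
  by (rule eqS.idRS) (auto simp: sm_typ_iff)

lemma eqS_SSh: "eq2 s t f g \<Longrightarrow> endo s t (tc_dom f) \<Longrightarrow> eqS s t (SSh f) (SSh g)"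
  by (rule eqS.congSh[of s t f g "tc_dom f" "tc_cod f"]) (auto simp: tc_typ_iff dest: eq2_parallel)

lemma eqS_SSh_TV:
  "tc_wt f \<Longrightarrow> tc_wt g \<Longrightarrow> tc_cod f = tc_dom g \<Longrightarrow> endo s t (tc_dom f) \<Longrightarrow>
     eqS s t (SSh (TV f g)) (SComp (SSh f) (SSh g))"
  by (rule eqS.functSh) (auto simp: tc_typ_iff)

lemma eqS_SSh_coherence:
  "tc_wt f \<Longrightarrow> tc_wt g \<Longrightarrow> tc_dom f = tc_dom g \<Longrightarrow> tc_cod f = tc_cod g \<Longrightarrow> endo s t (tc_dom f) \<Longrightarrow>
     eqS s t (SSh f) (SSh g)"
  by (rule eqS_SSh, rule eq2_coherence) auto

lemma eqS_cancel_SSh: "eqS s t (SComp (SSh h) f) (SComp (SSh h) g) \<Longrightarrow> eqS s t f g"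
proof -
  assume fg: "eqS s t (SComp (SSh h) f) (SComp (SSh h) g)"
  note wt = eqS_parallel[OF fg] and inv = tc_inv_typ[of h] tc_inv_inverse[of h]
  have h: "tc_wt h" "endo s t (tc_dom h)" "endo s t (tc_cod h)"
    using wt sm_wt_endo[of "SSh h"] by auto
  have hinv: "eqS s t (SComp (SSh (tc_inv h)) (SSh h)) (SSh (TId (tc_cod h)))"
    by (rule eqS.transS[OF eqS.symS[OF eqS_SSh_TV] eqS_SSh]) (use h inv in auto)
  have "eqS s t f (SComp (SComp (SSh (tc_inv h)) (SSh h)) f)"
    by (rule eqS.symS, rule eqS.transS[OF eqS_SComp[OF hinv eqS_refl] eqS_SComp_TId_left])
      (use wt h inv in auto)
  also have "eqS s t \<dots> (SComp (SSh (tc_inv h)) (SComp (SSh h) f))"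
    by (rule eqS_SComp_assoc) (use wt h inv in auto)
  also have "eqS s t \<dots> (SComp (SSh (tc_inv h)) (SComp (SSh h) g))"
    by (rule eqS_SComp[OF eqS_refl fg]) (use wt h inv in auto)
  also have "eqS s t \<dots> (SComp (SComp (SSh (tc_inv h)) (SSh h)) g)"
    by (rule eqS.symS, rule eqS_SComp_assoc) (use wt h inv in auto)
  also have "eqS s t \<dots> g"
    by (rule eqS.transS[OF eqS_SComp[OF hinv eqS_refl] eqS_SComp_TId_left]) (use wt h inv in auto)
  finally show ?thesis .
qed

fun sm_seq :: "('v, 'e) sm list \<Rightarrow> ('v, 'e) sm" where
  "sm_seq [] = SSh (TId (I undefined))"
| "sm_seq [f] = f"
| "sm_seq (f # g # fs) = SComp f (sm_seq (g # fs))"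

fun sm_chain :: "('v, 'e) sm list \<Rightarrow> bool" where
  "sm_chain [] = False"
| "sm_chain [f] = sm_wt f"
| "sm_chain (f # g # fs) = (sm_wt f \<and> sm_cod f = sm_dom g \<and> sm_chain (g # fs))"

lemma sm_seq_dom [simp]: "fs \<noteq> [] \<Longrightarrow> sm_dom (sm_seq fs) = sm_dom (hd fs)"
  by (induction fs rule: sm_seq.induct) auto

lemma sm_seq_cod [simp]: "fs \<noteq> [] \<Longrightarrow> sm_cod (sm_seq fs) = sm_cod (last fs)"
  by (induction fs rule: sm_seq.induct) auto

lemma sm_wt_sm_seq: "fs \<noteq> [] \<Longrightarrow> sm_wt (sm_seq fs) = sm_chain fs"
  by (induction fs rule: sm_seq.induct) auto

lemma sm_chain_append:
  "xs \<noteq> [] \<Longrightarrow> ys \<noteq> [] \<Longrightarrow>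
     sm_chain (xs @ ys) \<longleftrightarrow> sm_chain xs \<and> sm_chain ys \<and> sm_cod (last xs) = sm_dom (hd ys)"
proof (induction xs rule: sm_chain.induct)
  case (2 f)
  then show ?case
    by (cases ys) auto
qed auto

lemma sm_seq_append:
  "sm_chain (xs @ ys) \<Longrightarrow> xs \<noteq> [] \<Longrightarrow> ys \<noteq> [] \<Longrightarrow>
     eqS s t (sm_seq (xs @ ys)) (SComp (sm_seq xs) (sm_seq ys))"
proof (induction xs rule: sm_chain.induct)
  case (2 f)
  then show ?case
    by (cases ys) (auto intro: eqS_refl simp: sm_wt_sm_seq)
next
  case (3 f g fs)
  have f: "sm_chain (g # fs @ ys)" "sm_wt f" "sm_cod f = sm_dom g"
    using 3 by auto
  have gs: "sm_chain (g # fs)" "sm_chain ys" "sm_cod (last (g # fs)) = sm_dom (hd ys)"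
    using f(1) sm_chain_append[of "g # fs" ys] 3 by auto
  have "eqS s t (sm_seq (f # g # fs @ ys)) (SComp f (SComp (sm_seq (g # fs)) (sm_seq ys)))"
    using 3 f by (cases "fs @ ys") (auto intro!: eqS_SComp eqS_refl)
  also have "eqS s t \<dots> (SComp (SComp f (sm_seq (g # fs))) (sm_seq ys))"
    by (rule eqS.symS, rule eqS_SComp_assoc) (use f gs 3 in \<open>auto simp: sm_wt_sm_seq\<close>)
  finally show ?case
    by simp
qed auto

lemma sm_seq_append':
  "sm_chain (xs @ ys) \<Longrightarrow> xs \<noteq> [] \<Longrightarrow> ys \<noteq> [] \<Longrightarrow>
     eqS s t (SComp (sm_seq xs) (sm_seq ys)) (sm_seq (xs @ ys))"
  by (rule eqS.symS, rule sm_seq_append)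

lemma sm_seq_subst_prefix:
  assumes mm': "eqS s t (sm_seq m) (sm_seq m')" and chain: "sm_chain (m @ ys)"
    and "m \<noteq> []" "m' \<noteq> []"
  shows "eqS s t (sm_seq (m @ ys)) (sm_seq (m' @ ys))"
proof (cases "ys = []")
  case False
  have m: "sm_chain m" "sm_chain ys" "sm_cod (last m) = sm_dom (hd ys)"
    using assms False sm_chain_append[of m ys] by auto
  have m': "sm_chain m'" "sm_cod (last m') = sm_cod (last m)"
    using eqS_parallel[OF mm'] assms by (auto simp: sm_wt_sm_seq)
  have "eqS s t (sm_seq (m @ ys)) (SComp (sm_seq m) (sm_seq ys))"
    using sm_seq_append assms False by blast
  also have "eqS s t \<dots> (SComp (sm_seq m') (sm_seq ys))"
    by (rule eqS_SComp[OF mm' eqS_refl]) (use assms m False in \<open>auto simp: sm_wt_sm_seq\<close>)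
  also have "eqS s t \<dots> (sm_seq (m' @ ys))"
    by (rule sm_seq_append') (use m m' False assms sm_chain_append in auto)
  finally show ?thesis .
qed (use assms in simp)

lemma sm_seq_subst:
  assumes mm': "eqS s t (sm_seq m) (sm_seq m')" and chain: "sm_chain (xs @ m @ ys)"
    and m: "m \<noteq> []" "m' \<noteq> []" and "L = xs @ m @ ys" "L' = xs @ m' @ ys"
  shows "eqS s t (sm_seq L) (sm_seq L')"
proof (cases "xs = []")
  case True
  then show ?thesis
    using sm_seq_subst_prefix assms by simp
next
  case False
  have chains: "sm_chain xs" "sm_chain (m @ ys)" "sm_cod (last xs) = sm_dom (hd m)"
    using chain False m sm_chain_append[of xs "m @ ys"] by auto
  have rest: "eqS s t (sm_seq (m @ ys)) (sm_seq (m' @ ys))"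
    by (rule sm_seq_subst_prefix) (use mm' chains m in auto)
  have chain': "sm_chain (xs @ m' @ ys)"
    using eqS_parallel[OF rest] chains False m by (auto simp: sm_chain_append sm_wt_sm_seq)
  have "eqS s t (sm_seq (xs @ m @ ys)) (SComp (sm_seq xs) (sm_seq (m @ ys)))"
    by (rule sm_seq_append) (use chain False m in auto)
  also have "eqS s t \<dots> (SComp (sm_seq xs) (sm_seq (m' @ ys)))"
    by (rule eqS_SComp[OF eqS_refl rest]) (use chains False m in \<open>auto simp: sm_wt_sm_seq\<close>)
  also have "eqS s t \<dots> (sm_seq (xs @ m' @ ys))"
    by (rule sm_seq_append') (use chain' False m in auto)
  finally show ?thesis
    using assms(5,6) by simp
qed

lemma eqS_sm_seq_map_SSh:
  "tc_chain fs \<Longrightarrow> endo s t (tc_dom (hd fs)) \<Longrightarrow> eqS s t (sm_seq (map SSh fs)) (SSh (tc_seq fs))"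
proof (induction fs rule: tc_chain.induct)
  case (2 f)
  then show ?case
    by (auto intro: eqS_refl)
next
  case (3 f g fs)
  have f: "tc_wt f" "tc_cod f = tc_dom g" "tc_chain (g # fs)"
    using 3 by auto
  then have g: "endo s t (tc_dom g)"
    using 3(3) by (auto simp: endo_def simp del: tc_wt_simps) (metis tc_wt_simps)+
  have "eqS s t (sm_seq (map SSh (f # g # fs))) (SComp (SSh f) (SSh (tc_seq (g # fs))))"
    using 3 f g by (auto intro!: eqS_SComp eqS_refl)
  also have "eqS s t \<dots> (SSh (tc_seq (f # g # fs)))"
    by (simp, rule eqS.symS, rule eqS_SSh_TV) (use f 3 tc_wt_tc_seq in auto)
  finally show ?case .
qed auto

lemma eqS_sm_seq_SSh_coherence:
  assumes "tc_chain fs" "tc_chain gs" "tc_dom (hd fs) = tc_dom (hd gs)"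
    "tc_cod (last fs) = tc_cod (last gs)" "endo s t (tc_dom (hd fs))"
    and "L = map SSh fs" "L' = map SSh gs"
  shows "eqS s t (sm_seq L) (sm_seq L')"
proof -
  have ne: "fs \<noteq> []" "gs \<noteq> []"
    using assms by auto
  have "eqS s t (sm_seq (map SSh fs)) (SSh (tc_seq fs))"
    using eqS_sm_seq_map_SSh assms by blast
  also have "eqS s t \<dots> (SSh (tc_seq gs))"
    by (rule eqS_SSh_coherence) (use assms ne tc_wt_tc_seq in auto)
  also have "eqS s t \<dots> (sm_seq (map SSh gs))"
    by (rule eqS.symS, rule eqS_sm_seq_map_SSh) (use assms in auto)
  finally show ?thesis
    using assms by simp
qed

lemma eqS_natRot_seq:
  "tc_wt f \<Longrightarrow> tc_wt g \<Longrightarrow> endo s t (Cmp (tc_dom f) (tc_dom g)) \<Longrightarrow>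
     A = tc_dom f \<Longrightarrow> B = tc_dom g \<Longrightarrow> A' = tc_cod f \<Longrightarrow> B' = tc_cod g \<Longrightarrow>
     eqS s t (sm_seq [SSh (TH f g), SRot A' B']) (sm_seq [SRot A B, SSh (TH g f)])"
  using eqS.natRot[of s t f A A' g B B'] by (simp add: tc_typ_iff)

lemma eqS_rotrot_seq:
  "endo s t (Cmp A B) \<Longrightarrow> eqS s t (sm_seq [SRot A B, SRot B A]) (sm_seq [SSh (TId (Cmp A B))])"
  using eqS.rotrot by simp

lemma eqS_unitRot_seq:
  "endo s t X \<Longrightarrow> U = I (src1 s t X) \<Longrightarrow> eqS s t (sm_seq [SRot X U, SSh (TL X)]) (sm_seq [SSh (TR X)])"
  using eqS.unitRot by simp

lemma eqS_hexagon_seq: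
  assumes "endo s t (Cmp (Cmp M N) P)"
  shows "eqS s t (sm_seq [SRot (Cmp M N) P, SSh (TAi P M N), SRot (Cmp P M) N])
                 (sm_seq [SSh (TA M N P), SRot M (Cmp N P), SSh (TA N P M)])"
proof -
  have "eqS s t (sm_seq [SRot (Cmp M N) P, SSh (TAi P M N), SRot (Cmp P M) N])
                (SComp (SComp (SRot (Cmp M N) P) (SSh (TAi P M N))) (SRot (Cmp P M) N))"
    by (simp, rule eqS.symS, rule eqS_SComp_assoc) (use assms in \<open>auto simp: endo_def\<close>)
  also have "eqS s t \<dots> (SComp (SComp (SSh (TA M N P)) (SRot M (Cmp N P))) (SSh (TA N P M)))"
    by (rule eqS.hexagon[OF assms])
  also have "eqS s t \<dots> (sm_seq [SSh (TA M N P), SRot M (Cmp N P), SSh (TA N P M)])"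
    by (simp, rule eqS_SComp_assoc) (use assms in \<open>auto simp: endo_def\<close>)
  finally show ?thesis .
qed

lemma sm_seq_TId_left: "sm_wt f \<Longrightarrow> A = sm_dom f \<Longrightarrow> eqS s t (sm_seq [SSh (TId A), f]) (sm_seq [f])"
  using eqS_SComp_TId_left by simp

lemma sm_seq_TId_right: "sm_wt f \<Longrightarrow> B = sm_cod f \<Longrightarrow> eqS s t (sm_seq [f, SSh (TId B)]) (sm_seq [f])"
  using eqS_SComp_TId_right by simp

section \<open>Rotating normal forms\<close>

lemma rotate_Suc_Cons: "rotate (Suc a) (x # xs) = rotate a (xs @ [x])"
  by (simp add: rotate1_rotate_swap)

text \<open>The unit closing a rotated normal form sits at the target of its new last letter.\<close>

definition end_vertex :: "'e list \<Rightarrow> 'v \<Rightarrow> 'v" where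
  "end_vertex L v = (if L = [] then v else t (last L))"

definition nf_rot1 :: "'e \<Rightarrow> 'e list \<Rightarrow> 'v \<Rightarrow> ('v, 'e) sm" where
  "nf_rot1 x xs v = SComp (SRot (E x) (nf xs v)) (SSh (nf_can (Cmp (nf xs v) (E x))))"

fun nf_rot :: "nat \<Rightarrow> 'e list \<Rightarrow> 'v \<Rightarrow> ('v, 'e) sm" where
  "nf_rot 0 L v = SSh (TId (nf L v))"
| "nf_rot (Suc a) [] v = SSh (TId (I v))"
| "nf_rot (Suc a) (x#xs) v = SComp (nf_rot1 x xs v) (nf_rot a (xs @ [x]) (t x))"

lemma end_vertex_nf: "wf1 s t (nf L v) \<Longrightarrow> end_vertex L v = v"
  unfolding end_vertex_def by (induction L) auto

lemma endo_nf_rotate1: "endo s t (nf (x#xs) v) \<Longrightarrow> endo s t (nf (xs @ [x]) (t x))"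
  by (auto simp: endo_def)

lemma nf_rot_typ: "endo s t (nf L v) \<Longrightarrow> sm_wt (nf_rot a L v) \<and> sm_dom (nf_rot a L v) = nf L v
   \<and> sm_cod (nf_rot a L v) = nf (rotate a L) (end_vertex (rotate a L) v)"
proof (induction a arbitrary: L v)
  case 0 then show ?case by (simp add: endo_def end_vertex_nf)
next
  case (Suc a)
  show ?case
  proof (cases L)
    case Nil then show ?thesis by (simp add: endo_def end_vertex_def)
  next
    case (Cons x xs)
    have e: "endo s t (nf (xs @ [x]) (t x))" using Suc Cons endo_nf_rotate1 by blast
    note ih = Suc.IH[OF e]
    have w: "wf1 s t (nf xs v)" "src1 s t (nf xs v) = t x" "s x = v" using Suc Cons by (auto simp: endo_def)
    show ?thesis
      using ih w Cons by (simp del: rotate_Suc add: nf_rot1_def endo_def rotate_Suc_Cons end_vertex_def)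
  qed
qed

lemma nf_rot_simps[simp]: "endo s t (nf L v) \<Longrightarrow> sm_wt (nf_rot a L v)"
  "endo s t (nf L v) \<Longrightarrow> sm_dom (nf_rot a L v) = nf L v"
  "endo s t (nf L v) \<Longrightarrow> sm_cod (nf_rot a L v) = nf (rotate a L) (end_vertex (rotate a L) v)"
  using nf_rot_typ by blast+

lemma nf_rot_Nil: "nf_rot a [] v = SSh (TId (I v))"
  by (cases a) auto

lemma endo_nf_rotate: "endo s t (nf L v) \<Longrightarrow> endo s t (nf (rotate a L) (end_vertex (rotate a L) v))"
  using sm_wt_endo[of "nf_rot a L v"] nf_rot_typ[of L v a] by simp

lemma rot_amt_nf_rot: "rot_amt (nf_rot a L v) = (if L = [] then 0 else a)"
proof (induction a arbitrary: L v)
  case (Suc a)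
  then show ?case
    by (cases L) (auto simp: nf_rot1_def)
qed simp

lemma nf_rot_add: "endo s t (nf L v) \<Longrightarrow>
  eqS s t (nf_rot (a + b) L v) (SComp (nf_rot a L v) (nf_rot b (rotate a L) (end_vertex (rotate a L) v)))"
proof (induction a arbitrary: L v)
  case 0
  have end_vertex: "end_vertex L v = v" using 0 end_vertex_nf by (auto simp: endo_def)
  show ?case using 0 end_vertex by (auto intro!: eqS.symS[OF eqS_SComp_TId_left])
next
  case (Suc a)
  show ?case
  proof (cases L)
    case Nil then show ?thesis using Suc by (auto simp: nf_rot_Nil end_vertex_def endo_def intro!: eqS.symS[OF eqS_SComp_TId_left])
  next
    case (Cons x xs)
    have e: "endo s t (nf (xs @ [x]) (t x))" using Suc.prems Cons endo_nf_rotate1[of x xs v] by simp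
    have w: "wf1 s t (nf xs v)" "src1 s t (nf xs v) = t x" "s x = v" using Suc Cons by (auto simp: endo_def)
    have nvv: "end_vertex (rotate a (xs @ [x])) (t x) = end_vertex (rotate a (xs @ [x])) v"
      by (simp add: end_vertex_def)
    have rot1: "sm_wt (nf_rot1 x xs v)" "sm_dom (nf_rot1 x xs v) = nf (x#xs) v" "sm_cod (nf_rot1 x xs v) = nf (xs @ [x]) (t x)"
      using w by (auto simp: nf_rot1_def endo_def)
    note ih = Suc.IH[OF e]
    have unfold_rot: "nf_rot (Suc a + b) L v = SComp (nf_rot1 x xs v) (nf_rot (a + b) (xs @ [x]) (t x))"
      using Cons by simp
    have "eqS s t (nf_rot (Suc a + b) L v)
                  (SComp (nf_rot1 x xs v) (SComp (nf_rot a (xs @ [x]) (t x)) (nf_rot b (rotate a (xs @ [x])) (end_vertex (rotate a (xs @ [x])) (t x)))))"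
      unfolding unfold_rot by (rule eqS_SComp[OF eqS_refl ih]) (use rot1 e endo_nf_rotate[OF e, of a] in simp_all)
    also have "eqS s t \<dots> (SComp (SComp (nf_rot1 x xs v) (nf_rot a (xs @ [x]) (t x))) (nf_rot b (rotate a (xs @ [x])) (end_vertex (rotate a (xs @ [x])) (t x))))"
      by (rule eqS.symS, rule eqS_SComp_assoc) (use rot1 e endo_nf_rotate[OF e, of a] in simp_all)
    finally show ?thesis using Cons nvv by (simp del: rotate_Suc add: rotate_Suc_Cons)
  qed
qed

lemma SRot_nf_merge_Nil:
  assumes "wf1 s t (nf lb u)" "src1 s t (nf lb u) = u"
  shows "eqS s t (sm_seq [SRot (I u) (nf lb u), SSh (nf_merge lb u [] u)])
                 (sm_seq [SSh (TL (nf lb u)), SSh (TId (nf lb u))])"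
proof -
  let ?P = "nf lb u" and ?U = "I u"
  note w = assms
  have merge_Nil: "eqS s t (sm_seq [SSh (nf_merge lb u [] u)]) (sm_seq [SSh (TR ?P)])"
    by (simp, rule eqS_SSh, rule nf_merge_Nil) (use w in \<open>simp_all add: endo_def\<close>)
  have unitRot: "eqS s t (sm_seq [SSh (TR ?P)]) (sm_seq [SRot ?P ?U, SSh (TL ?P)])"
    by (rule eqS.symS, rule eqS_unitRot_seq) (use w in \<open>simp_all add: endo_def\<close>)
  have rotrot: "eqS s t (sm_seq [SRot ?U ?P, SRot ?P ?U]) (sm_seq [SSh (TId (Cmp ?U ?P))])"
    by (rule eqS_rotrot_seq) (use w in \<open>simp_all add: endo_def\<close>)
  have TId_left: "eqS s t (sm_seq [SSh (TId (Cmp ?U ?P)), SSh (TL ?P)]) (sm_seq [SSh (TL ?P)])"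
    by (rule sm_seq_TId_left) (use w in \<open>simp_all add: endo_def\<close>)
  have TId_right: "eqS s t (sm_seq [SSh (TL ?P)]) (sm_seq [SSh (TL ?P), SSh (TId ?P)])"
    by (rule eqS.symS, rule sm_seq_TId_right) (use w in \<open>simp_all add: endo_def\<close>)
  have "eqS s t (sm_seq [SRot ?U ?P, SSh (nf_merge lb u [] u)]) (sm_seq [SRot ?U ?P, SSh (TR ?P)])"
    by (rule sm_seq_subst[OF merge_Nil, where xs="[SRot ?U ?P]" and ys="[]"])
      (use w in \<open>simp_all add: endo_def\<close>)
  also have "eqS s t \<dots> (sm_seq [SRot ?U ?P, SRot ?P ?U, SSh (TL ?P)])"
    by (rule sm_seq_subst[OF unitRot, where xs="[SRot ?U ?P]" and ys="[]"])
      (use w in \<open>simp_all add: endo_def\<close>)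
  also have "eqS s t \<dots> (sm_seq [SSh (TId (Cmp ?U ?P)), SSh (TL ?P)])"
    by (rule sm_seq_subst[OF rotrot, where xs="[]" and ys="[SSh (TL ?P)]"])
      (use w in \<open>simp_all add: endo_def\<close>)
  also have "eqS s t \<dots> (sm_seq [SSh (TL ?P)])"
    by (rule sm_seq_subst[OF TId_left, where xs="[]" and ys="[]"]) (use w in \<open>simp_all add: endo_def\<close>)
  also note TId_right
  finally show ?thesis .
qed

lemma SRot_nf_merge_Cons:
  assumes ws: "wf1 s t (nf xs u)" "src1 s t (nf xs u) = t x" "s x = v" "wf1 s t (nf lb v)"
      "src1 s t (nf lb v) = u"
    and ih: "eqS s t (sm_seq [SRot (nf xs u) (nf (lb @ [x]) (t x)), SSh (nf_merge (lb @ [x]) (t x) xs u)])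
                   (sm_seq [SSh (nf_merge xs u (lb @ [x]) (t x)), nf_rot (length xs) (xs @ lb @ [x]) (t x)])"
  shows "eqS s t (sm_seq [SSh (nf_merge (x # xs) u lb v), nf_rot (length (x # xs)) ((x # xs) @ lb) v])
                 (sm_seq [SRot (Cmp (E x) (nf xs u)) (nf lb v), SSh (nf_merge lb v (x # xs) u)])"
proof -
  let ?M = "E x" and ?N = "nf xs u" and ?P = "nf lb v" and ?Q = "nf (xs @ lb) v" and ?B = "nf (lb @ [x]) (t x)"
  let ?mA = "nf_merge (x#xs) u lb v" and ?mNP = "nf_merge xs u lb v" and ?m5 = "nf_merge lb v (x#xs) u"
  let ?m3 = "nf_merge xs u (lb @ [x]) (t x)" and ?m4 = "nf_merge (lb @ [x]) (t x) xs u"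
  let ?c1 = "nf_can (Cmp ?Q ?M)" and ?k' = "nf_can (Cmp ?P ?M)"
  let ?k = "TV ?c1 (tc_inv ?m3)"
  let ?Rp = "nf_rot (length xs) (xs @ lb @ [x]) (t x)"
  have renorm: "eqS s t (sm_seq [SSh ?c1]) (sm_seq [SSh ?k, SSh ?m3])"
    by (rule eqS_sm_seq_SSh_coherence[where fs="[?c1]" and gs="[?k, ?m3]"])
      (use ws in \<open>simp_all add: endo_def\<close>)
  have ih_sym: "eqS s t (sm_seq [SSh ?m3, ?Rp]) (sm_seq [SRot ?N ?B, SSh ?m4])"
    by (rule eqS.symS[OF ih])
  have merge_unfold: "eqS s t (sm_seq [SSh ?mA])
                              (sm_seq [SSh (TA ?M ?N ?P), SSh (TH (TId ?M) ?mNP)])"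
    by (rule eqS_sm_seq_SSh_coherence[where fs="[?mA]" and gs="[TA ?M ?N ?P, TH (TId ?M) ?mNP]"])
      (use ws in \<open>simp_all add: endo_def\<close>)
  have natRot_M: "eqS s t (sm_seq [SSh (TH (TId ?M) ?mNP), SRot ?M ?Q])
                          (sm_seq [SRot ?M (Cmp ?N ?P), SSh (TH ?mNP (TId ?M))])"
    by (rule eqS_natRot_seq) (use ws in \<open>simp_all add: endo_def\<close>)
  have coh_NPM: "eqS s t (sm_seq [SSh (TH ?mNP (TId ?M)), SSh ?k])
                         (sm_seq [SSh (TA ?N ?P ?M), SSh (TH (TId ?N) ?k')])"
    by (rule eqS_sm_seq_SSh_coherence[where fs="[TH ?mNP (TId ?M), ?k]" and gs="[TA ?N ?P ?M, TH (TId ?N) ?k']"])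
      (use ws in \<open>simp_all add: endo_def\<close>)
  have natRot_N: "eqS s t (sm_seq [SSh (TH (TId ?N) ?k'), SRot ?N ?B])
                          (sm_seq [SRot ?N (Cmp ?P ?M), SSh (TH ?k' (TId ?N))])"
    by (rule eqS_natRot_seq) (use ws in \<open>simp_all add: endo_def\<close>)
  have coh_PMN: "eqS s t (sm_seq [SSh (TH ?k' (TId ?N)), SSh ?m4])
                         (sm_seq [SSh (TA ?P ?M ?N), SSh ?m5])"
    by (rule eqS_sm_seq_SSh_coherence[where fs="[TH ?k' (TId ?N), ?m4]" and gs="[TA ?P ?M ?N, ?m5]"])
      (use ws in \<open>simp_all add: endo_def\<close>)
  have hexagon: "eqS s t (sm_seq [SSh (TA ?M ?N ?P), SRot ?M (Cmp ?N ?P), SSh (TA ?N ?P ?M)])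
                    (sm_seq [SRot (Cmp ?M ?N) ?P, SSh (TAi ?P ?M ?N), SRot (Cmp ?P ?M) ?N])"
    by (rule eqS.symS, rule eqS_hexagon_seq) (use ws in \<open>simp_all add: endo_def\<close>)
  have rotrot: "eqS s t (sm_seq [SRot (Cmp ?P ?M) ?N, SRot ?N (Cmp ?P ?M)])
                        (sm_seq [SSh (TId (Cmp (Cmp ?P ?M) ?N))])"
    by (rule eqS_rotrot_seq) (use ws in \<open>simp_all add: endo_def\<close>)
  have coh_merge: "eqS s t (sm_seq [SSh (TAi ?P ?M ?N), SSh (TId (Cmp (Cmp ?P ?M) ?N)), SSh (TA ?P ?M ?N), SSh ?m5])
                           (sm_seq [SSh ?m5])"
    by (rule eqS_sm_seq_SSh_coherence[where fs="[TAi ?P ?M ?N, TId (Cmp (Cmp ?P ?M) ?N), TA ?P ?M ?N, ?m5]" and gs="[?m5]"])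
      (use ws in \<open>simp_all add: endo_def\<close>)
  have unfold_rot: "nf_rot (length (x#xs)) ((x#xs) @ lb) v = SComp (SComp (SRot ?M ?Q) (SSh ?c1)) ?Rp"
    by (simp add: nf_rot1_def)
  have assoc: "eqS s t (SComp (SComp (SRot ?M ?Q) (SSh ?c1)) ?Rp)
                    (SComp (SRot ?M ?Q) (SComp (SSh ?c1) ?Rp))"
    by (rule eqS_SComp_assoc) (use ws in \<open>simp_all add: endo_def\<close>)
  have "eqS s t (sm_seq [SSh ?mA, nf_rot (length (x#xs)) ((x#xs) @ lb) v])
                (sm_seq [SSh ?mA, SRot ?M ?Q, SSh ?c1, ?Rp])"
    by (simp only: unfold_rot sm_seq.simps, rule eqS_SComp[OF eqS_refl assoc])
      (use ws in \<open>simp_all add: endo_def\<close>)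
  also have "eqS s t \<dots> (sm_seq [SSh ?mA, SRot ?M ?Q, SSh ?k, SSh ?m3, ?Rp])"
    by (rule sm_seq_subst[OF renorm, where xs="[SSh ?mA, SRot ?M ?Q]" and ys="[?Rp]"])
      (use ws in \<open>simp_all add: endo_def\<close>)
  also have "eqS s t \<dots> (sm_seq [SSh ?mA, SRot ?M ?Q, SSh ?k, SRot ?N ?B, SSh ?m4])"
    by (rule sm_seq_subst[OF ih_sym, where xs="[SSh ?mA, SRot ?M ?Q, SSh ?k]" and ys="[]"])
      (use ws in \<open>simp_all add: endo_def\<close>)
  also have "eqS s t \<dots> (sm_seq [SSh (TA ?M ?N ?P), SSh (TH (TId ?M) ?mNP), SRot ?M ?Q, SSh ?k, SRot ?N ?B, SSh ?m4])"
    by (rule sm_seq_subst[OF merge_unfold, where xs="[]" and ys="[SRot ?M ?Q, SSh ?k, SRot ?N ?B, SSh ?m4]"])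
      (use ws in \<open>simp_all add: endo_def\<close>)
  also have "eqS s t \<dots> (sm_seq [SSh (TA ?M ?N ?P), SRot ?M (Cmp ?N ?P), SSh (TH ?mNP (TId ?M)), SSh ?k, SRot ?N ?B, SSh ?m4])"
    by (rule sm_seq_subst[OF natRot_M, where xs="[SSh (TA ?M ?N ?P)]" and ys="[SSh ?k, SRot ?N ?B, SSh ?m4]"])
      (use ws in \<open>simp_all add: endo_def\<close>)
  also have "eqS s t \<dots> (sm_seq [SSh (TA ?M ?N ?P), SRot ?M (Cmp ?N ?P), SSh (TA ?N ?P ?M), SSh (TH (TId ?N) ?k'), SRot ?N ?B, SSh ?m4])"
    by (rule sm_seq_subst[OF coh_NPM, where xs="[SSh (TA ?M ?N ?P), SRot ?M (Cmp ?N ?P)]" and ys="[SRot ?N ?B, SSh ?m4]"])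
      (use ws in \<open>simp_all add: endo_def\<close>)
  also have "eqS s t \<dots> (sm_seq [SSh (TA ?M ?N ?P), SRot ?M (Cmp ?N ?P), SSh (TA ?N ?P ?M), SRot ?N (Cmp ?P ?M), SSh (TH ?k' (TId ?N)), SSh ?m4])"
    by (rule sm_seq_subst[OF natRot_N, where xs="[SSh (TA ?M ?N ?P), SRot ?M (Cmp ?N ?P), SSh (TA ?N ?P ?M)]" and ys="[SSh ?m4]"])
      (use ws in \<open>simp_all add: endo_def\<close>)
  also have "eqS s t \<dots> (sm_seq [SSh (TA ?M ?N ?P), SRot ?M (Cmp ?N ?P), SSh (TA ?N ?P ?M), SRot ?N (Cmp ?P ?M), SSh (TA ?P ?M ?N), SSh ?m5])"
    by (rule sm_seq_subst[OF coh_PMN, where xs="[SSh (TA ?M ?N ?P), SRot ?M (Cmp ?N ?P), SSh (TA ?N ?P ?M), SRot ?N (Cmp ?P ?M)]" and ys="[]"])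
      (use ws in \<open>simp_all add: endo_def\<close>)
  also have "eqS s t \<dots> (sm_seq [SRot (Cmp ?M ?N) ?P, SSh (TAi ?P ?M ?N), SRot (Cmp ?P ?M) ?N, SRot ?N (Cmp ?P ?M), SSh (TA ?P ?M ?N), SSh ?m5])"
    by (rule sm_seq_subst[OF hexagon, where xs="[]" and ys="[SRot ?N (Cmp ?P ?M), SSh (TA ?P ?M ?N), SSh ?m5]"])
      (use ws in \<open>simp_all add: endo_def\<close>)
  also have "eqS s t \<dots> (sm_seq [SRot (Cmp ?M ?N) ?P, SSh (TAi ?P ?M ?N), SSh (TId (Cmp (Cmp ?P ?M) ?N)), SSh (TA ?P ?M ?N), SSh ?m5])"
    by (rule sm_seq_subst[OF rotrot, where xs="[SRot (Cmp ?M ?N) ?P, SSh (TAi ?P ?M ?N)]" and ys="[SSh (TA ?P ?M ?N), SSh ?m5]"])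
      (use ws in \<open>simp_all add: endo_def\<close>)
  also have "eqS s t \<dots> (sm_seq [SRot (Cmp ?M ?N) ?P, SSh ?m5])"
    by (rule sm_seq_subst[OF coh_merge, where xs="[SRot (Cmp ?M ?N) ?P]" and ys="[]"])
      (use ws in \<open>simp_all add: endo_def\<close>)
  finally show ?thesis .
qed

text \<open>Induction on the first normal form; each step is an application of the hexagon.\<close>

lemma SRot_nf_merge:
  assumes "wf1 s t (nf la u)" "wf1 s t (nf lb v)" "src1 s t (nf lb v) = u" "src1 s t (nf la u) = v"
  shows "eqS s t (sm_seq [SRot (nf la u) (nf lb v), SSh (nf_merge lb v la u)])
                 (sm_seq [SSh (nf_merge la u lb v), nf_rot (length la) (la @ lb) v])"
  using assms
proof (induction la arbitrary: lb v)
  case Nil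
  then show ?case
    using SRot_nf_merge_Nil[of lb u] by simp
next
  case (Cons x xs)
  have ws: "wf1 s t (nf xs u)" "src1 s t (nf xs u) = t x" "s x = v" "wf1 s t (nf lb v)"
      "src1 s t (nf lb v) = u"
    using Cons.prems by auto
  show ?case
    using eqS.symS[OF SRot_nf_merge_Cons[OF ws Cons.IH]] ws by simp
qed

lemma nf_rot_length: "endo s t (nf L v) \<Longrightarrow> eqS s t (nf_rot (length L) L v) (SSh (TId (nf L v)))"
proof -
  assume e: "endo s t (nf L v)"
  have w: "wf1 s t (nf L v)" "src1 s t (nf L v) = v" using e by (auto simp: endo_def)
  let ?N = "nf L v"
  have c: "eqS s t (sm_seq [SRot ?N (I v), SSh (TL ?N)])
                   (sm_seq [SSh (nf_merge L v [] v), nf_rot (length L) L v])"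
    using SRot_nf_merge[of L v "[]" v] w by simp
  have u: "eqS s t (sm_seq [SRot ?N (I v), SSh (TL ?N)]) (sm_seq [SSh (TR ?N)])"
    by (rule eqS_unitRot_seq) (use w e in simp_all)
  have l2: "eqS s t (SSh (nf_merge L v [] v)) (SSh (TR ?N))"
    by (rule eqS_SSh, rule nf_merge_Nil) (use w in \<open>simp_all add: endo_def\<close>)
  have "eqS s t (SComp (SSh (TR ?N)) (nf_rot (length L) L v))
                (SComp (SSh (nf_merge L v [] v)) (nf_rot (length L) L v))"
    by (rule eqS_SComp[OF eqS.symS[OF l2] eqS_refl]) (use w e in \<open>simp_all add: endo_def\<close>)
  also have "eqS s t \<dots> (SSh (TR ?N))" using eqS.transS[OF eqS.symS[OF c] u] by simp
  also have "eqS s t \<dots> (SComp (SSh (TR ?N)) (SSh (TId ?N)))"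
    by (rule eqS.symS, rule eqS_SComp_TId_right) (use w e in \<open>simp_all add: endo_def\<close>)
  finally show ?thesis by (rule eqS_cancel_SSh)
qed

lemma nf_rot_length_mult: "endo s t (nf L v) \<Longrightarrow>
    eqS s t (nf_rot (length L * q) L v) (SSh (TId (nf L v)))"
proof (induction q)
  case 0 then show ?case by (auto intro: eqS_refl simp: endo_def)
next
  case (Suc q)
  have end_vertex: "end_vertex L v = v" using Suc end_vertex_nf by (auto simp: endo_def)
  have "eqS s t (nf_rot (length L * Suc q) L v)
                (SComp (nf_rot (length L) L v) (nf_rot (length L * q) L v))"
    using nf_rot_add[OF Suc.prems, of "length L" "length L * q"] end_vertex by simp
  also have "eqS s t \<dots> (SComp (SSh (TId (nf L v))) (SSh (TId (nf L v))))"
    by (rule eqS_SComp[OF nf_rot_length Suc.IH]) (use Suc.prems in \<open>simp_all add: end_vertex\<close>)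
  also have "eqS s t \<dots> (SSh (TId (nf L v)))"
    by (rule eqS_SComp_TId_left) (use Suc.prems in \<open>auto simp: endo_def\<close>)
  finally show ?case .
qed

lemma nf_rot_mod: "endo s t (nf L v) \<Longrightarrow> eqS s t (nf_rot a L v) (nf_rot (a mod length L) L v)"
proof (cases "L = []")
  case True then show ?thesis by (simp add: nf_rot_Nil eqS_refl endo_def)
next
  case False
  assume e: "endo s t (nf L v)"
  have end_vertex: "end_vertex L v = v" using e end_vertex_nf by (auto simp: endo_def)
  let ?n = "length L"
  have a: "a = ?n * (a div ?n) + a mod ?n" by simp
  have "eqS s t (nf_rot a L v) (nf_rot (?n * (a div ?n) + a mod ?n) L v)"
    using a e by (metis eqS_refl nf_rot_simps(1))
  also have "eqS s t \<dots> (SComp (nf_rot (?n * (a div ?n)) L v) (nf_rot (a mod ?n) L v))"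
    using nf_rot_add[OF e, of "?n * (a div ?n)" "a mod ?n"] end_vertex by simp
  also have "eqS s t \<dots> (SComp (SSh (TId (nf L v))) (nf_rot (a mod ?n) L v))"
    by (rule eqS_SComp[OF nf_rot_length_mult eqS_refl]) (use e end_vertex in simp_all)
  also have "eqS s t \<dots> (nf_rot (a mod ?n) L v)"
    by (rule eqS_SComp_TId_left) (use e in simp_all)
  finally show ?thesis .
qed

lemma nf_rot_cong: "endo s t (nf L v) \<Longrightarrow> (L = [] \<or> a mod length L = b mod length L) \<Longrightarrow>
    eqS s t (nf_rot a L v) (nf_rot b L v)"
proof -
  assume e: "endo s t (nf L v)" and c: "L = [] \<or> a mod length L = b mod length L"
  show ?thesis
  proof (cases "L = []")
    case True then show ?thesis using e by (simp add: nf_rot_Nil eqS_refl endo_def)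
  next
    case False
    then have m: "a mod length L = b mod length L" using c by simp
    show ?thesis using nf_rot_mod[OF e, of a] nf_rot_mod[OF e, of b] m by (metis eqS.symS eqS.transS)
  qed
qed

section \<open>Classification of morphisms by rotation amount\<close>

lemma wf1_letters_Nil: "wf1 s t A \<Longrightarrow> letters A = [] \<Longrightarrow> src1 s t A = tgt1 s t A"
  by (induction A) auto

lemma wf1_letters_ends: "wf1 s t A \<Longrightarrow> letters A \<noteq> [] \<Longrightarrow>
    tgt1 s t A = t (last (letters A)) \<and> src1 s t A = s (hd (letters A))"
proof (induction A)
  case (Cmp A B)
  show ?case
  proof (cases "letters A = []")
    case True
    then have "letters B \<noteq> []" using Cmp by simp
    then show ?thesis using Cmp True wf1_letters_Nil[of A] by auto
  next
    case False
    show ?thesis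
    proof (cases "letters B = []")
      case True then show ?thesis using Cmp False wf1_letters_Nil[of B] by auto
    next
      case False
      then show ?thesis
        using Cmp \<open>letters A \<noteq> []\<close> by auto
    qed
  qed
qed auto

lemma sm_cod_letters: "sm_wt f \<Longrightarrow> letters (sm_cod f) = rotate (rot_amt f) (letters (sm_dom f))"
proof (induction f)
  case (SRot A B) then show ?case by (simp add: rotate_append)
next
  case (SComp f g) then show ?case by (simp add: rotate_rotate add.commute)
qed simp

lemma sm_cod_tgt_Nil: "sm_wt f \<Longrightarrow> letters (sm_dom f) = [] \<Longrightarrow>
    tgt1 s t (sm_cod f) = tgt1 s t (sm_dom f)"
proof (induction f)
  case (SRot A B) then show ?case using wf1_letters_Nil[of A] wf1_letters_Nil[of B] by (auto simp: endo_def)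
next
  case (SComp f g)
  have "letters (sm_dom g) = []" using SComp sm_cod_letters[of f] by auto
  then show ?case using SComp by auto
qed simp

lemma tgt_sm_cod: "sm_wt f \<Longrightarrow>
    tgt1 s t (sm_cod f) = end_vertex (letters (sm_cod f)) (tgt1 s t (sm_dom f))"
proof (cases "letters (sm_cod f) = []")
  case True
  assume f: "sm_wt f"
  have "letters (sm_dom f) = []" using True sm_cod_letters[OF f] by simp
  then show ?thesis using sm_cod_tgt_Nil[OF f] True by (simp add: end_vertex_def)
next
  case False
  assume f: "sm_wt f"
  show ?thesis using wf1_letters_ends[of "sm_cod f"] False f by (simp add: end_vertex_def)
qed

lemma endo_nf_letters: "endo s t A \<Longrightarrow> endo s t (nf (letters A) (tgt1 s t A))"
  using nf_can_simps[of A] by (auto simp: endo_def)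

lemma SRot_nf_can:
  assumes "endo s t (Cmp A B)"
  shows "eqS s t (SComp (SRot A B) (SSh (nf_can (Cmp B A))))
                 (SComp (SSh (nf_can (Cmp A B))) (nf_rot (length (letters A)) (letters A @ letters B) (tgt1 s t B)))"
proof -
  have w: "wf1 s t A" "wf1 s t B" "src1 s t B = tgt1 s t A" "src1 s t A = tgt1 s t B"
    using assms by (auto simp: endo_def)
  let ?cA = "nf_can A" and ?cB = "nf_can B"
  let ?nA = "nf (letters A) (tgt1 s t A)" and ?nB = "nf (letters B) (tgt1 s t B)"
  let ?mBA = "nf_merge (letters B) (tgt1 s t B) (letters A) (tgt1 s t A)"
  let ?mAB = "nf_merge (letters A) (tgt1 s t A) (letters B) (tgt1 s t B)"
  let ?Rp = "nf_rot (length (letters A)) (letters A @ letters B) (tgt1 s t B)"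
  have renorm_BA: "eqS s t (sm_seq [SSh (nf_can (Cmp B A))]) (sm_seq [SSh (TH ?cB ?cA), SSh ?mBA])"
    by (rule eqS_sm_seq_SSh_coherence[where fs="[nf_can (Cmp B A)]" and gs="[TH ?cB ?cA, ?mBA]"])
      (use w in \<open>simp_all add: endo_def\<close>)
  have natRot: "eqS s t (sm_seq [SRot A B, SSh (TH ?cB ?cA)]) (sm_seq [SSh (TH ?cA ?cB), SRot ?nA ?nB])"
    by (rule eqS.symS, rule eqS_natRot_seq) (use w in \<open>simp_all add: endo_def\<close>)
  have rotate_merge: "eqS s t (sm_seq [SRot ?nA ?nB, SSh ?mBA]) (sm_seq [SSh ?mAB, ?Rp])"
    using SRot_nf_merge[of "letters A" "tgt1 s t A" "letters B" "tgt1 s t B"] w by simp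
  have renorm_AB: "eqS s t (sm_seq [SSh (TH ?cA ?cB), SSh ?mAB]) (sm_seq [SSh (nf_can (Cmp A B))])"
    by (rule eqS_sm_seq_SSh_coherence[where fs="[TH ?cA ?cB, ?mAB]" and gs="[nf_can (Cmp A B)]"])
      (use w in \<open>simp_all add: endo_def\<close>)
  have "eqS s t (sm_seq [SRot A B, SSh (nf_can (Cmp B A))])
                (sm_seq [SRot A B, SSh (TH ?cB ?cA), SSh ?mBA])"
    by (rule sm_seq_subst[OF renorm_BA, where xs="[SRot A B]" and ys="[]"])
      (use w in \<open>simp_all add: endo_def\<close>)
  also have "eqS s t \<dots> (sm_seq [SSh (TH ?cA ?cB), SRot ?nA ?nB, SSh ?mBA])"
    by (rule sm_seq_subst[OF natRot, where xs="[]" and ys="[SSh ?mBA]"])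
      (use w in \<open>simp_all add: endo_def\<close>)
  also have "eqS s t \<dots> (sm_seq [SSh (TH ?cA ?cB), SSh ?mAB, ?Rp])"
    by (rule sm_seq_subst[OF rotate_merge, where xs="[SSh (TH ?cA ?cB)]" and ys="[]"])
      (use w in \<open>simp_all add: endo_def\<close>)
  also have "eqS s t \<dots> (sm_seq [SSh (nf_can (Cmp A B)), ?Rp])"
    by (rule sm_seq_subst[OF renorm_AB, where xs="[]" and ys="[?Rp]"])
      (use w in \<open>simp_all add: endo_def\<close>)
  finally show ?thesis
    by simp
qed

lemma nf_can_rot_natural: "sm_wt f \<Longrightarrow> eqS s t (SComp f (SSh (nf_can (sm_cod f))))
    (SComp (SSh (nf_can (sm_dom f))) (nf_rot (rot_amt f) (letters (sm_dom f)) (tgt1 s t (sm_dom f))))"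
proof (induction f)
  case (SSh f)
  have w: "tc_wt f" "endo s t (tc_dom f)" using SSh by auto
  have "eqS s t (SComp (SSh f) (SSh (nf_can (tc_cod f)))) (SSh (TV f (nf_can (tc_cod f))))"
    by (rule eqS.symS, rule eqS_SSh_TV) (use w in \<open>auto simp: endo_def\<close>)
  also have "eqS s t \<dots> (SSh (nf_can (tc_dom f)))"
    by (rule eqS_SSh, rule nf_can_natural) (use w in auto)
  also have "eqS s t \<dots> (SComp (SSh (nf_can (tc_dom f))) (SSh (TId (nf (letters (tc_dom f)) (tgt1 s t (tc_dom f))))))"
    by (rule eqS.symS, rule eqS_SComp_TId_right) (use w in \<open>auto simp: endo_def\<close>)
  finally show ?case by simp
next
  case (SRot A B)
  then show ?case
    using SRot_nf_can by simp
next
  case (SComp f g)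
  have w: "sm_wt f" "sm_wt g" "sm_cod f = sm_dom g" using SComp by auto
  let ?X = "sm_dom f" and ?Y = "sm_cod f" and ?Z = "sm_cod g"
  let ?a = "rot_amt f" and ?b = "rot_amt g"
  let ?LX = "letters ?X" and ?vX = "tgt1 s t ?X"
  have eX: "endo s t ?X" "endo s t ?Y" "endo s t ?Z" using sm_wt_endo[of f] sm_wt_endo[of g] w by auto
  have eN: "endo s t (nf ?LX ?vX)" using endo_nf_letters[OF eX(1)] .
  have LY: "letters ?Y = rotate ?a ?LX" "tgt1 s t ?Y = end_vertex (rotate ?a ?LX) ?vX"
    using sm_cod_letters[OF w(1)] tgt_sm_cod[OF w(1)] by auto
  have ty: "sm_wt (SSh (nf_can A))" "sm_dom (SSh (nf_can A)) = A" "sm_cod (SSh (nf_can A)) = nf (letters A) (tgt1 s t A)"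
    if "endo s t A" for A using that by (auto simp: endo_def)
  note e2 = endo_nf_rotate[OF eN, of ?a]
  have Rp: "eqS s t (SComp (nf_rot ?a ?LX ?vX) (nf_rot ?b (letters ?Y) (tgt1 s t ?Y)))
                    (nf_rot (?a + ?b) ?LX ?vX)"
    using eqS.symS[OF nf_rot_add[OF eN, of ?a ?b]] LY by simp
  have "eqS s t (SComp (SComp f g) (SSh (nf_can ?Z))) (SComp f (SComp g (SSh (nf_can ?Z))))"
    by (rule eqS_SComp_assoc) (use w ty[OF eX(3)] in auto)
  also have "eqS s t \<dots> (SComp f (SComp (SSh (nf_can ?Y)) (nf_rot ?b (letters ?Y) (tgt1 s t ?Y))))"
    by (rule eqS_SComp[OF eqS_refl]) (use SComp w in auto)
  also have "eqS s t \<dots> (SComp (SComp f (SSh (nf_can ?Y))) (nf_rot ?b (letters ?Y) (tgt1 s t ?Y)))"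
    by (rule eqS.symS, rule eqS_SComp_assoc) (use w ty[OF eX(2)] endo_nf_letters[OF eX(2)] in auto)
  also have "eqS s t \<dots> (SComp (SComp (SSh (nf_can ?X)) (nf_rot ?a ?LX ?vX)) (nf_rot ?b (letters ?Y) (tgt1 s t ?Y)))"
    by (rule eqS_SComp[OF _ eqS_refl]) (use SComp w endo_nf_letters[OF eX(2)] in auto)
  also have "eqS s t \<dots> (SComp (SSh (nf_can ?X)) (SComp (nf_rot ?a ?LX ?vX) (nf_rot ?b (letters ?Y) (tgt1 s t ?Y))))"
    by (rule eqS_SComp_assoc) (use w ty[OF eX(1)] eN LY e2 in auto)
  also have "eqS s t \<dots> (SComp (SSh (nf_can ?X)) (nf_rot (?a + ?b) ?LX ?vX))"
    by (rule eqS_SComp[OF eqS_refl Rp]) (use w ty[OF eX(1)] eN in auto)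
  finally show ?case by simp
qed

definition rot_morphism :: "('v, 'e) cell \<Rightarrow> ('v, 'e) cell \<Rightarrow> nat \<Rightarrow> ('v, 'e) sm" where
  "rot_morphism V V' r =
     SComp (SComp (SSh (nf_can V)) (nf_rot r (letters V) (tgt1 s t V))) (SSh (tc_inv (nf_can V')))"

lemma rot_morphism_wt:
  assumes "endo s t V" "endo s t V'" "letters V' = rotate r (letters V)"
    "tgt1 s t V' = end_vertex (letters V') (tgt1 s t V)"
  shows "sm_wt (rot_morphism V V' r) \<and> sm_dom (rot_morphism V V' r) = V \<and> sm_cod (rot_morphism V V' r) = V'"
  using assms endo_nf_letters[OF assms(1)] endo_nf_letters[OF assms(2)]
  by (auto simp: rot_morphism_def endo_def)

lemma rot_amt_rot_morphism: "rot_amt (rot_morphism V V' r) = (if letters V = [] then 0 else r)"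
  by (simp add: rot_morphism_def rot_amt_nf_rot)

lemma sm_factorisation:
  assumes h: "sm_wt h"
  shows "eqS s t h (rot_morphism (sm_dom h) (sm_cod h) (rot_amt h))"
proof -
  let ?X = "sm_dom h" and ?Y = "sm_cod h"
  have eY: "endo s t ?Y" "endo s t ?X" using sm_wt_endo[OF h] by auto
  have eN: "endo s t (nf (letters ?X) (tgt1 s t ?X))" using endo_nf_letters[OF eY(2)] .
  let ?c = "nf_can ?Y"
  have wc: "tc_wt ?c" "tc_dom ?c = ?Y" "tc_cod ?c = nf (letters ?Y) (tgt1 s t ?Y)"
    using eY by (auto simp: endo_def)
  note i = tc_inv_typ[of ?c] tc_inv_inverse[of ?c]
  have LY: "letters ?Y = rotate (rot_amt h) (letters ?X)" "tgt1 s t ?Y = end_vertex (rotate (rot_amt h) (letters ?X)) (tgt1 s t ?X)"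
    using sm_cod_letters[OF h] tgt_sm_cod[OF h] by auto
  have ci: "eqS s t (SComp (SSh ?c) (SSh (tc_inv ?c))) (SSh (TId ?Y))"
  proof -
    have "eqS s t (SComp (SSh ?c) (SSh (tc_inv ?c))) (SSh (TV ?c (tc_inv ?c)))"
      by (rule eqS.symS, rule eqS_SSh_TV) (use wc i eY in auto)
    also have "eqS s t \<dots> (SSh (TId ?Y))" by (rule eqS_SSh) (use wc i eY in auto)
    finally show ?thesis .
  qed
  have "eqS s t h (SComp h (SSh (TId ?Y)))" by (rule eqS.symS, rule eqS_SComp_TId_right) (use h in auto)
  also have "eqS s t \<dots> (SComp h (SComp (SSh ?c) (SSh (tc_inv ?c))))"
    by (rule eqS_SComp[OF eqS_refl eqS.symS[OF ci]]) (use h in auto)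
  also have "eqS s t \<dots> (SComp (SComp h (SSh ?c)) (SSh (tc_inv ?c)))"
    by (rule eqS.symS, rule eqS_SComp_assoc) (use h wc i eY in \<open>auto simp: endo_def\<close>)
  also have "eqS s t \<dots> (SComp (SComp (SSh (nf_can ?X)) (nf_rot (rot_amt h) (letters ?X) (tgt1 s t ?X))) (SSh (tc_inv ?c)))"
    by (rule eqS_SComp[OF nf_can_rot_natural[OF h] eqS_refl])
      (use h wc i eY eN LY endo_nf_rotate[OF eN, of "rot_amt h"] in \<open>auto simp: endo_def\<close>)
  finally show ?thesis
    by (simp add: rot_morphism_def)
qed

lemma eqS_if_rot_amt_cong:
  assumes f: "sm_wt f" and g: "sm_wt g" and dom: "sm_dom f = sm_dom g" and cod: "sm_cod f = sm_cod g"
    and amt: "letters (sm_dom f) = [] \<or> [rot_amt f = rot_amt g] (mod length (letters (sm_dom f)))"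
  shows "eqS s t f g"
proof -
  let ?X = "sm_dom f" and ?Y = "sm_cod f"
  have endo: "endo s t ?X" "endo s t ?Y" "endo s t (nf (letters ?X) (tgt1 s t ?X))"
    using sm_wt_endo[OF f] endo_nf_letters by auto
  have rot: "eqS s t (nf_rot (rot_amt f) (letters ?X) (tgt1 s t ?X))
                     (nf_rot (rot_amt g) (letters ?X) (tgt1 s t ?X))"
    by (rule nf_rot_cong[OF endo(3)]) (use amt in \<open>auto simp: cong_def\<close>)
  have "eqS s t f (rot_morphism ?X ?Y (rot_amt f))"
    by (rule sm_factorisation[OF f])
  also have "eqS s t \<dots> (rot_morphism ?X ?Y (rot_amt g))"
    unfolding rot_morphism_def
    by (intro eqS_SComp[OF eqS_SComp[OF eqS_refl rot] eqS_refl])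
      (use rot_morphism_wt[OF endo(1,2) sm_cod_letters[OF f] tgt_sm_cod[OF f]] in
        \<open>auto simp: rot_morphism_def\<close>)
  also have "eqS s t \<dots> g"
    using eqS.symS[OF sm_factorisation[OF g]] dom cod by simp
  finally show ?thesis .
qed

lemma rot_amt_cong_if_eqS: "eqS s t f g \<Longrightarrow>
    rot_amt f mod length (letters (sm_dom f)) = rot_amt g mod length (letters (sm_dom f))"
proof (induction rule: eqS.induct)
  case (symS f g) then show ?case using eqS_parallel[OF symS.hyps(1)] symS.IH by metis
next
  case (transS f g h) then show ?case using eqS_parallel[OF transS.hyps(1)] transS.IH by metis
next
  case (congC f f' g g' X Y)
  have w: "sm_wt f" "sm_wt g" "sm_cod f = sm_dom g" using congC.hyps by (simp_all add: sm_typ_iff)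
  have n: "length (letters (sm_dom g)) = length (letters (sm_dom f))"
    using sm_cod_letters[OF w(1)] w(3) by simp
  have ih1: "rot_amt f mod length (letters (sm_dom f)) = rot_amt f' mod length (letters (sm_dom f))"
    using congC.IH(1) .
  have ih2: "rot_amt g mod length (letters (sm_dom g)) = rot_amt g' mod length (letters (sm_dom g))"
    using congC.IH(2) .
  show ?case using mod_add_cong[OF ih1 ih2[unfolded n]] by simp
next
  case (natRot f A A' g B B')
  have "letters A' = letters A" using natRot.hyps(1) by (metis tc_typ_iff tc_wt_simps(3))
  then show ?case by simp
next
  case (hexagon M N P)
  then show ?case
    by (simp add: ac_simps)
next
  case (reflS f A B) then show ?case by simp
next
  case (congSh f g A B) then show ?case by simp
next
  case (functSh f A B g C) then show ?case by simp
next
  case (idLS f A B) then show ?case by simp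
next
  case (idRS f A B) then show ?case by simp
next
  case (assocS f A B g C h D) then show ?case by (simp add: add.assoc)
next
  case (rotrot A B) then show ?case by simp
next
  case (unitRot X) then show ?case by simp
qed

section \<open>Morphisms in a connected component\<close>

lemma sh_comp_sm_typ: "sh_comp s t W V \<Longrightarrow> sm_typ s t f V V' \<Longrightarrow> sh_comp s t W V'"
  unfolding sh_comp_def by (blast intro: rtranclp.rtrancl_into_rtrancl)

lemma sh_comp_rotate:
  assumes "sh_comp s t W V" "endo s t W"
  shows "endo s t V \<and> (\<exists>m. letters V = rotate m (letters W)) \<and> (letters W = [] \<longrightarrow> tgt1 s t V = tgt1 s t W)"
  using assms(1) unfolding sh_comp_def
proof (induction rule: rtranclp_induct)
  case base
  then show ?case
    using assms(2) by (auto intro: exI[of _ 0])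
next
  case (step Y Z)
  then obtain m where m: "letters Y = rotate m (letters W)"
    and tgt: "letters W = [] \<longrightarrow> tgt1 s t Y = tgt1 s t W"
    by blast
  from step(2) show ?case
  proof
    assume "\<exists>f. sm_typ s t f Y Z"
    then obtain f where f: "sm_wt f" "sm_dom f = Y" "sm_cod f = Z"
      by (auto simp: sm_typ_iff)
    have "letters Z = rotate (rot_amt f + m) (letters W)"
      using sm_cod_letters[OF f(1)] f m by (simp add: rotate_rotate)
    then show ?thesis
      using sm_wt_endo[OF f(1)] sm_cod_tgt_Nil[OF f(1)] f m tgt by auto
  next
    assume "\<exists>f. sm_typ s t f Z Y"
    then obtain f where f: "sm_wt f" "sm_dom f = Z" "sm_cod f = Y"
      by (auto simp: sm_typ_iff)
    let ?n = "length (letters Z)"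
    have "letters Z = rotate (?n - rot_amt f mod ?n) (letters Y)"
      using rotate_minus_mod_rotate[of "letters Z" ?n "rot_amt f"] sm_cod_letters[OF f(1)] f by simp
    with m have "letters Z = rotate (?n - rot_amt f mod ?n + m) (letters W)"
      by (simp add: rotate_rotate)
    then show ?thesis
      using sm_wt_endo[OF f(1)] sm_cod_tgt_Nil[OF f(1)] f tgt by auto
  qed
qed

lemma occ_perm_in_list_rots:
  assumes "sm_typ s t f V V'"
  shows "occ_perm (length (letters V)) f \<in> list_rots (letters V) (letters V')"
proof -
  let ?L = "letters V" and ?n = "length (letters V)" and ?r = "rot_amt f"
  have L': "letters V' = rotate ?r ?L"
    using assms sm_cod_letters by (auto simp: sm_typ_iff)
  show ?thesis
  proof (cases "?n = 0")
    case True
    then show ?thesis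
      using L' by (simp add: list_rots_Nil occ_perm_0)
  next
    case False
    define j where "j = (?n - ?r mod ?n) mod ?n"
    have "(j + ?r) mod ?n = 0"
      using cong_minus_mod_add[of ?n ?r] False by (simp add: j_def cong_def mod_add_left_eq)
    then have "rotate j (letters V') = ?L"
      using L' rotate_mod_length[of ?L ?n "j + ?r"] by (simp add: rotate_rotate)
    moreover have "occ_perm ?n f = rot_occ ?n j" "j < ?n"
      using False by (simp_all add: occ_perm_def j_def rot_occ_mod)
    ultimately show ?thesis
      using list_rots_eq_image[of ?L ?n "letters V'"] L' False by auto
  qed
qed

lemma eqS_iff_occ_perm_eq:
  assumes f: "sm_typ s t f V V'" and g: "sm_typ s t g V V'"
  shows "eqS s t f g \<longleftrightarrow> occ_perm (length (letters V)) f = occ_perm (length (letters V)) g"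
proof -
  let ?n = "length (letters V)"
  have wt: "sm_wt f" "sm_wt g" "sm_dom f = V" "sm_dom g = V" "sm_cod f = V'" "sm_cod g = V'"
    using f g by (auto simp: sm_typ_iff)
  have "eqS s t f g \<longleftrightarrow> letters V = [] \<or> [rot_amt f = rot_amt g] (mod ?n)"
    using rot_amt_cong_if_eqS[of f g] eqS_if_rot_amt_cong[of f g] wt by (auto simp: cong_def)
  then show ?thesis
    by (cases "?n = 0") (simp_all add: occ_perm_0 occ_perm_eq_iff)
qed

lemma occ_perm_surj:
  assumes V: "endo s t V" and V': "endo s t V'" and tgt: "letters V = [] \<longrightarrow> tgt1 s t V = tgt1 s t V'"
    and len: "length (letters V') = length (letters V)"
    and \<sigma>: "\<sigma> \<in> list_rots (letters V) (letters V')"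
  shows "\<exists>f. sm_typ s t f V V' \<and> occ_perm (length (letters V)) f = \<sigma>"
proof (cases "letters V = []")
  case True
  then have "sm_typ s t (rot_morphism V V' 0) V V'"
    using rot_morphism_wt[OF V V', of 0] tgt len by (simp add: sm_typ_iff end_vertex_def)
  moreover have "\<sigma> = (\<lambda>i. i)"
    using \<sigma> True len by (simp add: list_rots_Nil)
  ultimately show ?thesis
    using True by (auto simp: occ_perm_0)
next
  case False
  let ?L = "letters V" and ?L' = "letters V'" and ?n = "length (letters V)"
  obtain j where j: "j < ?n" "rotate j ?L' = ?L" "\<sigma> = rot_occ ?n j"
    using \<sigma> list_rots_eq_image[of ?L ?n ?L'] len False by auto
  let ?f = "rot_morphism V V' (?n - j)"
  have "rotate (?n - j) ?L = rotate (?n - j + j) ?L'"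
    by (metis j(2) rotate_rotate)
  also have "\<dots> = ?L'"
    using j(1) len rotate_mod_length[of ?L' ?n ?n] by simp
  finally have "rotate (?n - j) ?L = ?L'" .
  moreover have "tgt1 s t V' = end_vertex ?L' (tgt1 s t V)"
    using wf1_letters_ends[of V'] V' len False by (auto simp: endo_def end_vertex_def)
  ultimately have "sm_typ s t ?f V V'"
    using rot_morphism_wt[OF V V'] by (simp add: sm_typ_iff)
  moreover have "occ_perm ?n ?f = \<sigma>"
    using j False cong_minus_minus_mod[of ?n j]
    by (simp add: occ_perm_def rot_amt_rot_morphism rot_occ_eq_iff)
  ultimately show ?thesis
    by blast
qed

lemma sh_comp_letters:
  assumes "endo s t W" "sh_comp s t W V"
  shows "endo s t V \<and> (\<exists>m. letters V = rotate m (letters W)) \<and> length (letters V) = length (letters W)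
    \<and> (letters V = [] \<longrightarrow> tgt1 s t V = tgt1 s t W)"
proof -
  obtain m where "endo s t V" "letters V = rotate m (letters W)" "letters W = [] \<longrightarrow> tgt1 s t V = tgt1 s t W"
    using sh_comp_rotate[OF assms(2,1)] by blast
  then show ?thesis
    by auto
qed

lemma card_list_rots_sh_comp:
  "endo s t W \<Longrightarrow> sh_comp s t W V \<Longrightarrow> sh_comp s t W V' \<Longrightarrow>
     card (list_rots (letters V) (letters V')) = card (list_rots (letters W) (letters W))"
  using sh_comp_letters card_list_rots_rotate by metis

lemma sh_comp_hom_sets:
  assumes W: "endo s t W" and V: "sh_comp s t W V" and V': "sh_comp s t W V'"
  defines "n \<equiv> length (letters W)"
  shows "(\<forall>f. sm_typ s t f V V' \<longrightarrow> occ_perm n f \<in> list_rots (letters V) (letters V'))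
    \<and> (\<forall>f g. sm_typ s t f V V' \<and> sm_typ s t g V V' \<longrightarrow> (eqS s t f g \<longleftrightarrow> occ_perm n f = occ_perm n g))
    \<and> (\<forall>\<sigma>\<in>list_rots (letters V) (letters V'). \<exists>f. sm_typ s t f V V' \<and> occ_perm n f = \<sigma>)"
  using sh_comp_letters[OF W V] sh_comp_letters[OF W V'] occ_perm_in_list_rots[of _ V V']
    eqS_iff_occ_perm_eq[of _ V V'] occ_perm_surj[of V V']
  unfolding n_def by auto

lemma sh_comp_aperiodic_thin:
  assumes "endo s t W" "aperiodic (letters W)" "sh_comp s t W V" "sm_typ s t f V V'" "sm_typ s t g V V'"
  shows "eqS s t f g"
proof -
  have V': "sh_comp s t W V'"
    using sh_comp_sm_typ assms(3,4) .
  have "card (list_rots (letters V) (letters V')) = 1"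
    using card_list_rots_sh_comp[OF assms(1,3) V'] card_list_rots_aperiodic[OF assms(2)] by simp
  then show ?thesis
    using sh_comp_hom_sets[OF assms(1,3) V'] assms(4,5) by (metis card_1_singletonE singletonD)
qed

end

theorem mainTheorem5:
  fixes s t :: "'e \<Rightarrow> 'v" and W :: "('v, 'e) cell"
  assumes "endo s t W"
  defines "n \<equiv> length (letters W)"
      and "k \<equiv> card (list_rots (letters W) (letters W))"
  shows "k dvd n
    \<and> (\<forall>V V'. sh_comp s t W V \<and> sh_comp s t W V' \<longrightarrow>
          card (list_rots (letters V) (letters V')) = k
        \<and> (\<forall>f. sm_typ s t f V V' \<longrightarrow> occ_perm n f \<in> list_rots (letters V) (letters V'))
        \<and> (\<forall>f g. sm_typ s t f V V' \<and> sm_typ s t g V V' \<longrightarrow>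
                   (eqS s t f g \<longleftrightarrow> occ_perm n f = occ_perm n g))
        \<and> (\<forall>\<sigma>\<in>list_rots (letters V) (letters V'). \<exists>f. sm_typ s t f V V' \<and> occ_perm n f = \<sigma>))
    \<and> (\<forall>V V' V'' f g. sh_comp s t W V \<and> sm_typ s t f V V' \<and> sm_typ s t g V' V'' \<longrightarrow>
          occ_perm n (SComp f g) = occ_perm n g \<circ> occ_perm n f)
    \<and> (aperiodic (letters W) \<longrightarrow>
          (\<forall>V V' f g. sh_comp s t W V \<and> sm_typ s t f V V' \<and> sm_typ s t g V V' \<longrightarrow> eqS s t f g))"
proof -
  have "k dvd n"
    unfolding k_def n_def by (rule card_list_rots_self_dvd)
  moreover have "card (list_rots (letters V) (letters V')) = k"
    if "sh_comp s t W V" "sh_comp s t W V'" for V V'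
    unfolding k_def using card_list_rots_sh_comp[OF assms(1) that] .
  ultimately show ?thesis
    using sh_comp_hom_sets[OF assms(1), folded n_def] sh_comp_aperiodic_thin[OF assms(1)] occ_perm_SComp
    by blast
qed

end
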